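(* Let $X$ be a Banach lattice and let $(e_n)_{n\ge1}$ be a semi-normalized basic sequence in $X$ (i.e. $0<\inf_n\|e_n\|\le\sup_n\|e_n\|<\infty$), with closed linear span $E=[e_n]$ and biorthogonal functionals $e_n^*\in E^*$. For $x\in E$ let $\mathcal{G}_m(x)$ denote the $m$-th natural greedy sum of $x$ (defined in the context). The following are equivalent. (i) For all $x\in E$, $\mathcal{G}_m(x)\xrightarrow{u}x$ as $m\to\infty$. (ii) For all $x\in E$, $\mathcal{G}_m(x)\xrightarrow{o}x$ as $m\to\infty$. (iii) For all $x\in E$ there is $u\in X$ with $|\mathcal{G}_m(x)|\le u$ for all $m$. (iv) For all $x\in E$, the sequence $\big(\bigvee_{n=1}^m|\mathcal{G}_n(x)|\big)_{m\ge1}$ is norm bounded. (v) There exists $C\ge1$ such that for all $x\in E$ and $m\in\mathbb{N}$, $\big\|\bigvee_{n=1}^m|\mathcal{G}_n(x)|\big\|\le C\|x\|$.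
   Context: For $x\in E$, the natural greedy ordering is the injective map $\rho=\rho_x:\mathbb{N}\to\mathbb{N}$ such that $\{n: e_n^*(x)\ne0\}\subseteq\rho(\mathbb{N})$ and, whenever $j<k$, either $|e^*_{\rho(j)}(x)|>|e^*_{\rho(k)}(x)|$, or $|e^*_{\rho(j)}(x)|=|e^*_{\rho(k)}(x)|$ and $\rho(j)<\rho(k)$. The $m$-th natural greedy sum is $\mathcal{G}_m(x)=\sum_{n=1}^m e^*_{\rho(n)}(x)e_{\rho(n)}$. Convergences in $X$: $x_n\xrightarrow{u}x$ (uniform convergence) means there exist $e\in X_+$ and real numbers $\epsilon_k\downarrow0$ such that for every $k$ there is $n_k$ with $|x_n-x|\le\epsilon_k e$ for all $n\ge n_k$. $x_n\xrightarrow{o}x$ (order convergence) means there is a net $(y_\beta)$ in $X$ with $y_\beta\downarrow0$ (decreasing with infimum $0$) such that for every $\beta$ there is $n_\beta$ with $|x_n-x|\le y_\beta$ for all $n\ge n_\beta$. *)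

theory Defs
  imports "HOL-Analysis.Analysis"
begin

class banach_lattice = banach + ordered_real_vector + lattice +
  assumes lattice_norm_mono:
    "sup x (- x) \<le> sup y (- y) \<Longrightarrow> norm x \<le> norm y"

definition labs :: "'a::{lattice,uminus} \<Rightarrow> 'a" where
  "labs x = sup x (- x)"

definition cspan :: "(nat \<Rightarrow> 'a::real_normed_vector) \<Rightarrow> 'a set" where
  "cspan e = closure (span (range e))"

definition basic_sequence :: "(nat \<Rightarrow> 'a::real_normed_vector) \<Rightarrow> bool" where
  "basic_sequence e \<longleftrightarrow> (\<forall>n. e n \<noteq> 0) \<and>
     (\<forall>x \<in> cspan e. \<exists>!a. (\<lambda>N. \<Sum>n<N. a n *\<^sub>R e n) \<longlonglongrightarrow> x)"

definition semi_normalized :: "(nat \<Rightarrow> 'a::real_normed_vector) \<Rightarrow> bool" where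
  "semi_normalized e \<longleftrightarrow> (\<exists>c>0. \<forall>n. c \<le> norm (e n)) \<and> (\<exists>C. \<forall>n. norm (e n) \<le> C)"

definition coeff :: "(nat \<Rightarrow> 'a::real_normed_vector) \<Rightarrow> 'a \<Rightarrow> nat \<Rightarrow> real" where
  "coeff e x = (THE a. (\<lambda>N. \<Sum>n<N. a n *\<^sub>R e n) \<longlonglongrightarrow> x)"

text \<open>Natural greedy orderings of x (any choice yields the same greedy sums).\<close>
definition is_natural_greedy_ordering ::
    "(nat \<Rightarrow> 'a::real_normed_vector) \<Rightarrow> 'a \<Rightarrow> (nat \<Rightarrow> nat) \<Rightarrow> bool" where
  "is_natural_greedy_ordering e x \<rho> \<longleftrightarrow> inj \<rho> \<and> {n. coeff e x n \<noteq> 0} \<subseteq> range \<rho> \<and>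
     (\<forall>j k. j < k \<longrightarrow>
        \<bar>coeff e x (\<rho> j)\<bar> > \<bar>coeff e x (\<rho> k)\<bar> \<or>
        (\<bar>coeff e x (\<rho> j)\<bar> = \<bar>coeff e x (\<rho> k)\<bar> \<and> \<rho> j < \<rho> k))"

definition greedy_ordering :: "(nat \<Rightarrow> 'a::real_normed_vector) \<Rightarrow> 'a \<Rightarrow> nat \<Rightarrow> nat" where
  "greedy_ordering e x = (SOME \<rho>. is_natural_greedy_ordering e x \<rho>)"

definition greedy_sum :: "(nat \<Rightarrow> 'a::real_normed_vector) \<Rightarrow> nat \<Rightarrow> 'a \<Rightarrow> 'a" where
  "greedy_sum e m x = (\<Sum>n<m. coeff e x (greedy_ordering e x n) *\<^sub>R e (greedy_ordering e x n))"

definition u_conv :: "(nat \<Rightarrow> 'a::{ordered_real_vector,lattice}) \<Rightarrow> 'a \<Rightarrow> bool" where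
  "u_conv xs x \<longleftrightarrow> (\<exists>u \<ge> 0. \<exists>\<epsilon> :: nat \<Rightarrow> real. antimono \<epsilon> \<and> \<epsilon> \<longlonglongrightarrow> 0 \<and>
      (\<forall>k. \<exists>nk. \<forall>n \<ge> nk. labs (xs n - x) \<le> \<epsilon> k *\<^sub>R u))"

text \<open>Order convergence: dominated eventually by every member of a decreasing net with
  infimum 0. A net decreasing to 0 is represented by its range, i.e. a nonempty downward
  directed set D whose infimum in X is 0 (indexed by itself).\<close>
definition o_conv :: "(nat \<Rightarrow> 'a::{ordered_real_vector,lattice}) \<Rightarrow> 'a \<Rightarrow> bool" where
  "o_conv xs x \<longleftrightarrow> (\<exists>D. D \<noteq> {} \<and>
      (\<forall>a\<in>D. \<forall>b\<in>D. \<exists>c\<in>D. c \<le> a \<and> c \<le> b) \<and>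
      (\<forall>d\<in>D. 0 \<le> d) \<and> (\<forall>z. (\<forall>d\<in>D. z \<le> d) \<longrightarrow> z \<le> 0) \<and>
      (\<forall>d\<in>D. \<exists>nd. \<forall>n \<ge> nd. labs (xs n - x) \<le> d))"

end

theory Submission
  imports Defs "HOL-Library.Lattice_Algebras"
begin

text \<open>
  (i) \<Rightarrow> (ii) \<Rightarrow> (iii) \<Rightarrow> (iv) are soft: the multiples \<open>\<epsilon>\<^sub>k u\<close> of a regulator \<open>u\<close> have
  infimum 0 because the norm is a lattice norm, an order convergent sequence is order bounded, and
  an order bound of the greedy sums bounds their finite suprema.

  (v) \<Rightarrow> (i): choose \<open>N\<^sub>j\<close> with \<open>\<parallel>x - S\<^sub>N\<^sub>j x\<parallel> \<le> 4\<^sup>-\<^sup>j\<close>, where \<open>S\<^sub>N\<close> is the \<open>N\<close>-th partial sum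
  operator. Once the greedy set of \<open>x\<close> contains the support of \<open>S\<^sub>N\<^sub>j x\<close>, the remainder
  \<open>x - G\<^sub>m x\<close> is a greedy remainder of the tail \<open>z\<^sub>j = x - S\<^sub>N\<^sub>j x\<close>, hence is dominated by
  \<open>w\<^sub>j = \<bar>z\<^sub>j\<bar> + sup\<^sub>k \<bar>G\<^sub>k z\<^sub>j\<bar>\<close>, whose norm is at most \<open>(1 + C) 4\<^sup>-\<^sup>j\<close>. The regulator is
  \<open>\<Sum>\<^sub>j 2\<^sup>j w\<^sub>j\<close>.

  (iv) \<Rightarrow> (v) is a gliding hump. If (v) fails there are blocks \<open>b\<^sub>n\<close> with \<open>\<parallel>b\<^sub>n\<parallel> \<le> 2\<^sup>-\<^sup>n\<close>,
  disjoint supports, and every coefficient of a later block smaller than every nonzero coefficient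
  of an earlier one, whose greedy maximal functions have norm at least \<open>n\<close>. The greedy sums of
  \<open>b\<^sub>n\<close> are then differences of greedy sums of \<open>x = \<Sum>\<^sub>n b\<^sub>n\<close>, so (iv) fails for \<open>x\<close>.

  The one fact needed from the theory of bases is that the basis constant \<open>sup\<^sub>N \<parallel>S\<^sub>N\<parallel>\<close> is
  finite; it is proved by the Baire category argument of the open mapping theorem.
\<close>

section \<open>Vector lattices\<close>

subclass (in banach_lattice) lattice_ab_group_add ..

lemma labs_le_iff: "labs x \<le> u \<longleftrightarrow> x \<le> u \<and> - x \<le> u"
  for x :: "'a::lattice_ab_group_add"
  by (simp add: labs_def)

lemma labs_ge_self: "x \<le> labs x"
  for x :: "'a::lattice_ab_group_add"
  by (simp add: labs_def)

lemma labs_ge_minus: "- x \<le> labs x"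
  for x :: "'a::lattice_ab_group_add"
  by (simp add: labs_def)

lemma labs_nonneg: "0 \<le> labs x"
  for x :: "'a::lattice_ab_group_add"
proof -
  have "x + - x \<le> labs x + labs x"
    by (rule add_mono[OF labs_ge_self labs_ge_minus])
  then show ?thesis by simp
qed

lemma labs_of_nonneg: "0 \<le> x \<Longrightarrow> labs x = x"
  for x :: "'a::lattice_ab_group_add"
  by (simp add: labs_def minus_le_self_iff sup.absorb1)

lemma labs_zero [simp]: "labs (0::'a::lattice_ab_group_add) = 0"
  by (simp add: labs_of_nonneg)

lemma labs_minus [simp]: "labs (- x) = labs x"
  for x :: "'a::lattice_ab_group_add"
  by (simp add: labs_def sup.commute)

lemma labs_minus_commute: "labs (x - y) = labs (y - x)"
  for x y :: "'a::lattice_ab_group_add"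
  by (metis labs_minus minus_diff_eq)

lemma labs_add_le: "labs (x + y) \<le> labs x + labs y"
  for x y :: "'a::lattice_ab_group_add"
  unfolding labs_le_iff minus_add_distrib
  by (metis add_mono labs_ge_minus labs_ge_self)

lemma labs_diff_le: "labs (x - y) \<le> labs x + labs y"
  for x y :: "'a::lattice_ab_group_add"
  using labs_add_le[of x "- y"] by simp

lemma labs_sum_le: "labs (sum f A) \<le> (\<Sum>i\<in>A. labs (f i))"
  for f :: "'b \<Rightarrow> 'a::lattice_ab_group_add"
proof (induction A rule: infinite_finite_induct)
  case (insert a A)
  then show ?case
    using labs_add_le[of "f a" "sum f A"] by (simp add: order_trans)
qed simp_all

lemma pprt_le_add_labs: "pprt a \<le> pprt b + labs (a - b)"
  for a b :: "'a::lattice_ab_group_add"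
proof -
  have "a \<le> b + labs (a - b)"
    using labs_ge_self[of "a - b"] by (simp add: algebra_simps)
  also have "\<dots> \<le> pprt b + labs (a - b)"
    by (simp add: pprt_def)
  finally show ?thesis
    using labs_nonneg[of "a - b"] by (simp add: pprt_def add_increasing)
qed

lemma labs_pprt_diff_le: "labs (pprt a - pprt b) \<le> labs (a - b)"
  for a b :: "'a::lattice_ab_group_add"
  unfolding labs_le_iff minus_diff_eq
  using pprt_le_add_labs[of a b] pprt_le_add_labs[of b a]
  by (simp add: labs_minus_commute[of b a] algebra_simps)

lemma labs_scaleR: "labs (c *\<^sub>R x) = \<bar>c\<bar> *\<^sub>R labs x"
  for x :: "'a::banach_lattice"
proof -
  have le: "labs (c *\<^sub>R z) \<le> \<bar>c\<bar> *\<^sub>R labs z" for c and z :: 'a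
  proof (cases "c \<ge> 0")
    case True
    then show ?thesis unfolding labs_le_iff
      by (auto intro: scaleR_left_mono labs_ge_self labs_ge_minus simp flip: scaleR_minus_right)
  next
    case False
    then have "c *\<^sub>R z = \<bar>c\<bar> *\<^sub>R (- z)" "- (c *\<^sub>R z) = \<bar>c\<bar> *\<^sub>R z" by auto
    then show ?thesis unfolding labs_le_iff
      by (metis abs_ge_zero labs_ge_self labs_ge_minus scaleR_left_mono)
  qed
  show ?thesis
  proof (cases "c = 0")
    case False
    have "\<bar>c\<bar> *\<^sub>R labs x = \<bar>c\<bar> *\<^sub>R labs (inverse c *\<^sub>R (c *\<^sub>R x))"
      using False by simp
    also have "\<dots> \<le> \<bar>c\<bar> *\<^sub>R (\<bar>inverse c\<bar> *\<^sub>R labs (c *\<^sub>R x))"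
      by (intro scaleR_left_mono le) auto
    also have "\<dots> = labs (c *\<^sub>R x)"
      using False by simp
    finally show ?thesis using le[of c x] by (rule antisym[rotated])
  qed simp
qed

lemma norm_labs [simp]: "norm (labs x) = norm x"
  for x :: "'a::banach_lattice"
proof -
  have "sup (labs x) (- labs x) = sup x (- x)"
    by (simp add: labs_def[symmetric] labs_of_nonneg labs_nonneg)
  then show ?thesis
    by (metis antisym lattice_norm_mono order_refl)
qed

lemma norm_le_norm_if_labs_le: "labs x \<le> u \<Longrightarrow> norm x \<le> norm u"
  for x u :: "'a::banach_lattice"
  using lattice_norm_mono[of x u] labs_of_nonneg[of u] labs_nonneg[of x]
  by (simp add: labs_def[symmetric] order_trans)

lemma norm_mono_nonneg: "0 \<le> x \<Longrightarrow> x \<le> y \<Longrightarrow> norm x \<le> norm y"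
  for x y :: "'a::banach_lattice"
  by (simp add: labs_of_nonneg norm_le_norm_if_labs_le)

lemma norm_pprt_diff_le: "norm (pprt a - pprt b) \<le> norm (a - b)"
  for a b :: "'a::banach_lattice"
  using norm_le_norm_if_labs_le[OF labs_pprt_diff_le[of a b]] by simp

lemma norm_pprt_le: "norm (pprt a) \<le> norm a"
  for a :: "'a::banach_lattice"
  using norm_pprt_diff_le[of a 0] by simp

lemma isCont_pprt: "isCont (pprt :: 'a::banach_lattice \<Rightarrow> 'a) x"
proof -
  have "1-lipschitz_on UNIV (pprt :: 'a \<Rightarrow> 'a)"
    by (rule lipschitz_onI) (simp_all add: dist_norm norm_pprt_diff_le)
  then show ?thesis
    using lipschitz_on_continuous_on continuous_on_eq_continuous_at by blast
qed

lemma closed_nonneg_cone: "closed {x::'a::banach_lattice. 0 \<le> x}"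
proof -
  have "{x::'a. 0 \<le> x} = (\<lambda>x. pprt (- x)) -` {0}"
    by (auto simp: le_zero_iff_zero_pprt[symmetric])
  moreover have "isCont (\<lambda>x. pprt (- x)) x" for x :: 'a
    by (intro isCont_o2[OF _ isCont_pprt] continuous_intros)
  ultimately show ?thesis
    by (simp add: continuous_closed_vimage)
qed

lemma member_le_sum_nonneg:
  fixes f :: "'b \<Rightarrow> 'a::ordered_comm_monoid_add"
  assumes "finite A" and "i \<in> A" and "\<And>j. j \<in> A \<Longrightarrow> 0 \<le> f j"
  shows "f i \<le> sum f A"
  using sum_mono2[of A "{i}" f] assms by simp

lemma LIMSEQ_lattice_lower_bound:
  fixes f :: "nat \<Rightarrow> 'a::banach_lattice"
  assumes "f \<longlonglongrightarrow> l" and "eventually (\<lambda>n. v \<le> f n) sequentially"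
  shows "v \<le> l"
proof -
  have "eventually (\<lambda>n. f n - v \<in> {x. 0 \<le> x}) sequentially"
    using assms(2) by (auto elim: eventually_mono)
  moreover have "(\<lambda>n. f n - v) \<longlonglongrightarrow> l - v"
    by (intro tendsto_diff assms(1) tendsto_const)
  ultimately have "l - v \<in> {x. 0 \<le> x}"
    by (rule Lim_in_closed_set[OF closed_nonneg_cone _ sequentially_bot])
  then show ?thesis by simp
qed

lemma summable_term_le_suminf:
  fixes f :: "nat \<Rightarrow> 'a::banach_lattice"
  assumes "summable f" and "\<And>n. 0 \<le> f n"
  shows "f i \<le> suminf f"
proof (rule LIMSEQ_lattice_lower_bound[OF summable_LIMSEQ[OF assms(1)]])
  show "\<forall>\<^sub>F n in sequentially. f i \<le> sum f {..<n}"
    using eventually_ge_at_top[of "Suc i"]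
    by eventually_elim (auto intro!: member_le_sum_nonneg assms(2))
qed

section \<open>Relatively uniform and order convergence\<close>

lemma le_zero_if_le_vanishing_multiples:
  fixes z u :: "'a::banach_lattice"
  assumes le: "\<And>k. z \<le> \<epsilon> k *\<^sub>R u" and lim: "\<epsilon> \<longlonglongrightarrow> 0"
  shows "z \<le> 0"
proof -
  have bound: "norm (pprt z) \<le> \<bar>\<epsilon> k\<bar> * norm u" for k
  proof -
    have "norm (pprt z) \<le> norm (pprt (\<epsilon> k *\<^sub>R u))"
      by (intro norm_mono_nonneg pprt_mono le zero_le_pprt)
    also have "\<dots> \<le> \<bar>\<epsilon> k\<bar> * norm u"
      using norm_pprt_le[of "\<epsilon> k *\<^sub>R u"] by simp
    finally show ?thesis .
  qed
  have "(\<lambda>k. \<bar>\<epsilon> k\<bar> * norm u) \<longlonglongrightarrow> 0"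
    by (intro tendsto_mult_left_zero tendsto_rabs_zero lim)
  then have "(\<lambda>k. pprt z) \<longlonglongrightarrow> 0"
    by (rule Lim_null_comparison[OF always_eventually[OF allI[OF bound]]])
  then show ?thesis
    by (simp add: LIMSEQ_const_iff le_zero_iff_zero_pprt)
qed

lemma u_conv_imp_o_conv:
  fixes xs :: "nat \<Rightarrow> 'a::banach_lattice"
  assumes "u_conv xs x"
  shows "o_conv xs x"
proof -
  obtain u :: 'a and \<epsilon> :: "nat \<Rightarrow> real" where u: "0 \<le> u" and dec: "decseq \<epsilon>"
    and lim: "\<epsilon> \<longlonglongrightarrow> 0" and dom: "\<And>k. \<exists>nk. \<forall>n\<ge>nk. labs (xs n - x) \<le> \<epsilon> k *\<^sub>R u"
    using assms unfolding u_conv_def by blast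
  have \<epsilon>_nonneg: "0 \<le> \<epsilon> k" for k
    by (rule decseq_ge[OF dec lim])
  define D where "D = range (\<lambda>k. \<epsilon> k *\<^sub>R u)"
  show ?thesis
    unfolding o_conv_def
  proof (intro exI[of _ D] conjI ballI allI impI)
    show "D \<noteq> {}"
      by (simp add: D_def)
    fix a b assume "a \<in> D" "b \<in> D"
    then obtain i j where "a = \<epsilon> i *\<^sub>R u" "b = \<epsilon> j *\<^sub>R u"
      by (auto simp: D_def)
    moreover have "\<epsilon> (max i j) \<le> \<epsilon> i" "\<epsilon> (max i j) \<le> \<epsilon> j"
      using dec by (simp_all add: antimonoD)
    ultimately have "\<epsilon> (max i j) *\<^sub>R u \<le> a \<and> \<epsilon> (max i j) *\<^sub>R u \<le> b"
      using u by (simp add: scaleR_right_mono)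
    then show "\<exists>c\<in>D. c \<le> a \<and> c \<le> b"
      unfolding D_def by blast
  next
    fix d assume "d \<in> D"
    then show "0 \<le> d"
      using \<epsilon>_nonneg u by (auto simp: D_def intro: scaleR_nonneg_nonneg)
  next
    fix z assume "\<forall>d\<in>D. z \<le> d"
    then show "z \<le> 0"
      using lim by (intro le_zero_if_le_vanishing_multiples) (auto simp: D_def)
  next
    fix d assume "d \<in> D"
    then show "\<exists>nd. \<forall>n\<ge>nd. labs (xs n - x) \<le> d"
      using dom by (auto simp: D_def)
  qed
qed

lemma o_conv_imp_order_bounded:
  fixes xs :: "nat \<Rightarrow> 'a::banach_lattice"
  assumes "o_conv xs x"
  shows "\<exists>u. \<forall>m. labs (xs m) \<le> u"
proof -
  obtain d nd where d: "0 \<le> d" and nd: "\<And>n. n \<ge> nd \<Longrightarrow> labs (xs n - x) \<le> d"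
    using assms unfolding o_conv_def by blast
  define u where "u = labs x + d + (\<Sum>n<nd. labs (xs n))"
  have head: "0 \<le> (\<Sum>n<nd. labs (xs n))"
    by (intro sum_nonneg labs_nonneg)
  have "labs (xs m) \<le> u" for m
  proof (cases "m < nd")
    case True
    then have "labs (xs m) \<le> (\<Sum>n<nd. labs (xs n))"
      by (intro member_le_sum_nonneg labs_nonneg) auto
    then show ?thesis
      unfolding u_def using d labs_nonneg[of x] by (simp add: add_increasing)
  next
    case False
    have "labs (xs m) \<le> labs (xs m - x) + labs x"
      using labs_add_le[of "xs m - x" x] by simp
    also have "\<dots> \<le> u"
      using nd[of m] False head by (simp add: u_def add_increasing2)
    finally show ?thesis .
  qed
  then show ?thesis by blast
qed

lemma strict_mono_bracket:
  fixes M :: "nat \<Rightarrow> nat"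
  assumes "strict_mono M" and "M k \<le> n"
  shows "\<exists>j\<ge>k. M j \<le> n \<and> n < M (Suc j)"
proof -
  have "\<forall>j. M j \<le> n \<longrightarrow> j \<le> n"
    using strict_mono_imp_increasing[OF assms(1)] le_trans by blast
  then obtain j where j: "M j \<le> n" and greatest: "\<forall>i. M i \<le> n \<longrightarrow> i \<le> j"
    using Nat.ex_has_greatest_nat[of "\<lambda>j. M j \<le> n", OF assms(2)] by blast
  have "k \<le> j" "\<not> M (Suc j) \<le> n"
    using greatest assms(2) by auto
  then show ?thesis
    using j by (auto simp: not_le)
qed

lemma u_conv_of_blockwise_bound:
  fixes xs :: "nat \<Rightarrow> 'a::banach_lattice"
  assumes M: "strict_mono M"
    and block: "\<And>j n. M j \<le> n \<Longrightarrow> n < M (Suc j) \<Longrightarrow> labs (xs n - x) \<le> w j"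
    and w_nonneg: "\<And>j. 0 \<le> w j" and summable: "summable (\<lambda>j. 2 ^ j * norm (w j))"
  shows "u_conv xs x"
proof -
  define v where "v j = (2::real) ^ j *\<^sub>R w j" for j
  have v_nonneg: "0 \<le> v j" for j
    unfolding v_def by (intro scaleR_nonneg_nonneg w_nonneg) simp
  have "summable v"
    by (rule summable_norm_cancel) (simp add: v_def summable)
  define u where "u = suminf v"
  have w_le: "w j \<le> (1/2::real) ^ j *\<^sub>R u" for j
  proof -
    have "w j = (1/2::real) ^ j *\<^sub>R v j"
      by (simp add: v_def power_mult_distrib[symmetric])
    also have "\<dots> \<le> (1/2::real) ^ j *\<^sub>R u"
      unfolding u_def
      by (intro scaleR_left_mono summable_term_le_suminf[OF \<open>summable v\<close> v_nonneg]) simp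
    finally show ?thesis .
  qed
  have u_nonneg: "0 \<le> u"
    using w_nonneg[of 0] w_le[of 0] by simp
  show ?thesis
    unfolding u_conv_def
  proof (intro exI[of _ u] exI[of _ "\<lambda>k. (1/2::real) ^ k"] conjI allI)
    show "antimono (\<lambda>k. (1/2::real) ^ k)"
      by (rule antimonoI) (simp add: power_decreasing)
    show "(\<lambda>k. (1/2::real) ^ k) \<longlonglongrightarrow> 0"
      by (rule LIMSEQ_power_zero) simp
    fix k
    have "labs (xs n - x) \<le> (1/2::real) ^ k *\<^sub>R u" if n: "M k \<le> n" for n
    proof -
      obtain j where j: "k \<le> j" "M j \<le> n" "n < M (Suc j)"
        using strict_mono_bracket[OF M n] by blast
      have "labs (xs n - x) \<le> (1/2::real) ^ j *\<^sub>R u"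
        using block[OF j(2,3)] w_le[of j] by (rule order_trans)
      also have "\<dots> \<le> (1/2::real) ^ k *\<^sub>R u"
        by (intro scaleR_right_mono u_nonneg power_decreasing j(1)) auto
      finally show ?thesis .
    qed
    then show "\<exists>nk. \<forall>n\<ge>nk. labs (xs n - x) \<le> (1/2::real) ^ k *\<^sub>R u"
      by blast
  qed (rule u_nonneg)
qed

section \<open>The natural greedy ordering\<close>

definition supp :: "(nat \<Rightarrow> real) \<Rightarrow> nat set" where
  "supp a = {n. a n \<noteq> 0}"

definition greedy_prec :: "(nat \<Rightarrow> real) \<Rightarrow> nat \<Rightarrow> nat \<Rightarrow> bool" where
  "greedy_prec a i j \<longleftrightarrow> \<bar>a j\<bar> < \<bar>a i\<bar> \<or> (\<bar>a i\<bar> = \<bar>a j\<bar> \<and> i < j)"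

definition greedy_rank :: "(nat \<Rightarrow> real) \<Rightarrow> nat \<Rightarrow> nat" where
  "greedy_rank a n = card {i. greedy_prec a i n}"

text \<open>The index set of the \<open>m\<close>-th greedy sum, described without the ordering that
  \<open>greedy_ordering\<close> picks by \<open>SOME\<close>; the link is \<open>greedy_sum_eq_coord_proj\<close>.\<close>
definition greedy_set :: "(nat \<Rightarrow> real) \<Rightarrow> nat \<Rightarrow> nat set" where
  "greedy_set a m = {n. a n \<noteq> 0 \<and> greedy_rank a n < m}"

definition greedy_closed :: "(nat \<Rightarrow> real) \<Rightarrow> nat set \<Rightarrow> bool" where
  "greedy_closed a I \<longleftrightarrow> finite I \<and> I \<subseteq> supp a \<and> (\<forall>n\<in>I. \<forall>i. greedy_prec a i n \<longrightarrow> i \<in> I)"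

definition greedy_enumeration :: "(nat \<Rightarrow> real) \<Rightarrow> (nat \<Rightarrow> nat) \<Rightarrow> bool" where
  "greedy_enumeration a \<rho> \<longleftrightarrow>
     inj \<rho> \<and> supp a \<subseteq> range \<rho> \<and> (\<forall>j k. j < k \<longrightarrow> greedy_prec a (\<rho> j) (\<rho> k))"

lemma is_natural_greedy_ordering_iff:
  "is_natural_greedy_ordering e x \<rho> \<longleftrightarrow> greedy_enumeration (coeff e x) \<rho>"
  by (simp add: is_natural_greedy_ordering_def greedy_enumeration_def greedy_prec_def supp_def
      conj_commute)

lemma greedy_prec_irrefl: "\<not> greedy_prec a i i"
  by (auto simp: greedy_prec_def)

lemma greedy_prec_asym: "greedy_prec a i j \<Longrightarrow> \<not> greedy_prec a j i"
  by (auto simp: greedy_prec_def)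

lemma greedy_prec_trans: "greedy_prec a i j \<Longrightarrow> greedy_prec a j k \<Longrightarrow> greedy_prec a i k"
  unfolding greedy_prec_def by linarith

lemma greedy_prec_linear: "i \<noteq> j \<Longrightarrow> greedy_prec a i j \<or> greedy_prec a j i"
  unfolding greedy_prec_def by linarith

lemma greedy_prec_abs_le: "greedy_prec a i n \<Longrightarrow> \<bar>a n\<bar> \<le> \<bar>a i\<bar>"
  unfolding greedy_prec_def by auto

lemma greedy_prec_nonzero: "greedy_prec a i n \<Longrightarrow> a n \<noteq> 0 \<Longrightarrow> a i \<noteq> 0"
  unfolding greedy_prec_def by auto

lemma finite_abs_ge_if_null:
  fixes a :: "nat \<Rightarrow> real"
  assumes "a \<longlonglongrightarrow> 0" and "t > 0"
  shows "finite {i. t \<le> \<bar>a i\<bar>}"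
proof -
  obtain N where "\<And>i. N \<le> i \<Longrightarrow> \<bar>a i\<bar> < t"
    using LIMSEQ_D[OF assms] by auto
  then have "{i. t \<le> \<bar>a i\<bar>} \<subseteq> {..<N}"
    by (auto simp: not_less[symmetric])
  then show ?thesis
    using finite_subset by blast
qed

lemma finite_greedy_predecessors:
  assumes "a \<longlonglongrightarrow> 0" and "a n \<noteq> 0"
  shows "finite {i. greedy_prec a i n}"
proof (rule finite_subset)
  show "{i. greedy_prec a i n} \<subseteq> {i. \<bar>a n\<bar> \<le> \<bar>a i\<bar>}"
    by (auto dest: greedy_prec_abs_le)
  show "finite {i. \<bar>a n\<bar> \<le> \<bar>a i\<bar>}"
    using assms by (simp add: finite_abs_ge_if_null)
qed

lemma greedy_rank_less:
  assumes "a \<longlonglongrightarrow> 0" and "greedy_prec a i n" and "a n \<noteq> 0"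
  shows "greedy_rank a i < greedy_rank a n"
  unfolding greedy_rank_def
proof (rule psubset_card_mono[OF finite_greedy_predecessors[OF assms(1,3)]])
  have "{j. greedy_prec a j i} \<subseteq> {j. greedy_prec a j n}"
    using assms(2) greedy_prec_trans by blast
  moreover have "i \<in> {j. greedy_prec a j n} - {j. greedy_prec a j i}"
    using assms(2) by (simp add: greedy_prec_irrefl)
  ultimately show "{j. greedy_prec a j i} \<subset> {j. greedy_prec a j n}"
    by blast
qed

lemma inj_on_greedy_rank:
  assumes "a \<longlonglongrightarrow> 0"
  shows "inj_on (greedy_rank a) (supp a)"
proof (rule inj_onI, rule ccontr)
  fix i j assume "i \<in> supp a" "j \<in> supp a" "greedy_rank a i = greedy_rank a j" "i \<noteq> j"
  then show False
    using greedy_prec_linear[of i j a] greedy_rank_less[OF assms, of i j] greedy_rank_less[OF assms, of j i]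
    by (auto simp: supp_def)
qed

lemma greedy_set_subset_supp: "greedy_set a m \<subseteq> supp a"
  by (auto simp: greedy_set_def supp_def)

lemma greedy_set_mono: "m \<le> m' \<Longrightarrow> greedy_set a m \<subseteq> greedy_set a m'"
  by (auto simp: greedy_set_def)

lemma finite_greedy_set:
  assumes "a \<longlonglongrightarrow> 0"
  shows "finite (greedy_set a m)"
proof -
  have "greedy_set a m \<subseteq> greedy_rank a -` {..<m} \<inter> supp a"
    by (auto simp: greedy_set_def supp_def)
  then show ?thesis
    using finite_vimage_IntI[OF _ inj_on_greedy_rank[OF assms]] finite_subset by blast
qed

lemma card_greedy_set_le:
  assumes "a \<longlonglongrightarrow> 0"
  shows "card (greedy_set a m) \<le> m"
proof -
  have "inj_on (greedy_rank a) (greedy_set a m)"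
    using inj_on_greedy_rank[OF assms] greedy_set_subset_supp inj_on_subset by blast
  moreover have "greedy_rank a ` greedy_set a m \<subseteq> {..<m}"
    by (auto simp: greedy_set_def)
  ultimately have "card (greedy_set a m) \<le> card {..<m}"
    by (intro card_inj_on_le) auto
  then show ?thesis
    by simp
qed

lemma greedy_closed_greedy_set:
  assumes "a \<longlonglongrightarrow> 0"
  shows "greedy_closed a (greedy_set a m)"
  unfolding greedy_closed_def
proof (intro conjI ballI allI impI finite_greedy_set[OF assms] greedy_set_subset_supp)
  fix n i assume n: "n \<in> greedy_set a m" and prec: "greedy_prec a i n"
  then have "a n \<noteq> 0" "greedy_rank a n < m"
    by (simp_all add: greedy_set_def)
  then show "i \<in> greedy_set a m"
    using greedy_rank_less[OF assms prec] greedy_prec_nonzero[OF prec] by (simp add: greedy_set_def)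
qed

lemma greedy_set_card_eq:
  assumes "a \<longlonglongrightarrow> 0" and "greedy_closed a I"
  shows "greedy_set a (card I) = I"
proof
  have fin: "finite I" and sub: "I \<subseteq> supp a"
    and down: "\<And>n i. n \<in> I \<Longrightarrow> greedy_prec a i n \<Longrightarrow> i \<in> I"
    using assms(2) by (auto simp: greedy_closed_def)
  show "I \<subseteq> greedy_set a (card I)"
  proof
    fix n assume n: "n \<in> I"
    have "{i. greedy_prec a i n} \<subseteq> I"
      using down[OF n] by blast
    moreover have "n \<notin> {i. greedy_prec a i n}"
      by (simp add: greedy_prec_irrefl)
    ultimately have "{i. greedy_prec a i n} \<subset> I"
      using n by blast
    then have "greedy_rank a n < card I"
      unfolding greedy_rank_def by (rule psubset_card_mono[OF fin])
    then show "n \<in> greedy_set a (card I)"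
      using n sub by (auto simp: greedy_set_def supp_def)
  qed
  show "greedy_set a (card I) \<subseteq> I"
  proof (rule subsetI, rule ccontr)
    fix n assume n: "n \<in> greedy_set a (card I)" and "n \<notin> I"
    have "I \<subseteq> {i. greedy_prec a i n}"
    proof
      fix i assume "i \<in> I"
      with \<open>n \<notin> I\<close> have "i \<noteq> n" "\<not> greedy_prec a n i"
        using down by blast+
      then show "i \<in> {i. greedy_prec a i n}"
        using greedy_prec_linear by blast
    qed
    moreover have "finite {i. greedy_prec a i n}"
      using n by (intro finite_greedy_predecessors[OF assms(1)]) (simp add: greedy_set_def)
    ultimately have "card I \<le> greedy_rank a n"
      unfolding greedy_rank_def by (rule card_mono[rotated])
    with n show False
      by (simp add: greedy_set_def)
  qed
qed

definition restrict_seq :: "nat set \<Rightarrow> (nat \<Rightarrow> real) \<Rightarrow> nat \<Rightarrow> real" where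
  "restrict_seq S a n = (if n \<in> S then a n else 0)"

lemma greedy_closed_restrict:
  assumes "greedy_closed a I"
  shows "greedy_closed (restrict_seq S a) (I \<inter> S)"
  unfolding greedy_closed_def
proof (intro conjI ballI allI impI)
  show "finite (I \<inter> S)" "I \<inter> S \<subseteq> supp (restrict_seq S a)"
    using assms by (auto simp: greedy_closed_def supp_def restrict_seq_def)
  fix n i assume n: "n \<in> I \<inter> S" and prec: "greedy_prec (restrict_seq S a) i n"
  have "restrict_seq S a n \<noteq> 0"
    using n assms by (auto simp: greedy_closed_def supp_def restrict_seq_def)
  then have "restrict_seq S a i \<noteq> 0"
    by (rule greedy_prec_nonzero[OF prec])
  then have "i \<in> S"
    by (auto simp: restrict_seq_def split: if_splits)
  with n prec have "greedy_prec a i n"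
    by (simp add: restrict_seq_def greedy_prec_def)
  then show "i \<in> I \<inter> S"
    using n \<open>i \<in> S\<close> assms by (auto simp: greedy_closed_def)
qed

lemma greedy_set_scale: "s \<noteq> 0 \<Longrightarrow> greedy_set (\<lambda>n. s * a n) = greedy_set a"
  by (auto simp: greedy_set_def greedy_rank_def greedy_prec_def abs_mult intro!: ext)

lemma greedy_closed_empty: "greedy_closed a {}"
  by (simp add: greedy_closed_def)

lemma greedy_set_eventually_contains:
  assumes "finite F"
  shows "\<exists>m\<^sub>0. \<forall>m\<ge>m\<^sub>0. F \<inter> supp a \<subseteq> greedy_set a m"
proof (intro exI allI impI)
  fix m assume m: "(\<Sum>n\<in>F. Suc (greedy_rank a n)) \<le> m"
  show "F \<inter> supp a \<subseteq> greedy_set a m"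
  proof
    fix n assume n: "n \<in> F \<inter> supp a"
    then have "Suc (greedy_rank a n) \<le> (\<Sum>n\<in>F. Suc (greedy_rank a n))"
      using assms by (intro member_le_sum) auto
    then show "n \<in> greedy_set a m"
      using n m by (auto simp: greedy_set_def supp_def)
  qed
qed

lemma greedy_set_contains_blocks:
  fixes N :: "nat \<Rightarrow> nat"
  obtains M :: "nat \<Rightarrow> nat" where "strict_mono M" "\<And>j m. M j \<le> m \<Longrightarrow> {..<N j} \<inter> supp a \<subseteq> greedy_set a m"
proof -
  have "\<forall>j. \<exists>m\<^sub>0. \<forall>m\<ge>m\<^sub>0. {..<N j} \<inter> supp a \<subseteq> greedy_set a m"
    using greedy_set_eventually_contains[OF finite_lessThan] by blast
  then obtain m\<^sub>0 where m\<^sub>0: "\<And>j m. m\<^sub>0 j \<le> m \<Longrightarrow> {..<N j} \<inter> supp a \<subseteq> greedy_set a m"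
    by metis
  define M where "M j = (\<Sum>i\<le>j. m\<^sub>0 i) + j" for j
  show ?thesis
  proof (rule that)
    show "strict_mono M"
      by (rule strict_monoI_Suc) (simp add: M_def)
    fix j m assume "M j \<le> m"
    moreover have "m\<^sub>0 j \<le> M j"
      using member_le_sum[of j "{..j}" m\<^sub>0] by (simp add: M_def)
    ultimately show "{..<N j} \<inter> supp a \<subseteq> greedy_set a m"
      by (intro m\<^sub>0) simp
  qed
qed

definition greedy_next :: "(nat \<Rightarrow> real) \<Rightarrow> nat set \<Rightarrow> nat" where
  "greedy_next a F = (LEAST n. n \<notin> F \<and> (\<forall>i. i \<notin> F \<longrightarrow> \<bar>a i\<bar> \<le> \<bar>a n\<bar>))"

function greedy_seq :: "(nat \<Rightarrow> real) \<Rightarrow> nat \<Rightarrow> nat" where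
  "greedy_seq a k = greedy_next a (greedy_seq a ` {..<k})"
  by auto
termination by (relation "Wellfounded.measure snd") auto

declare greedy_seq.simps [simp del]

lemma finite_set_has_abs_max:
  fixes a :: "nat \<Rightarrow> real"
  assumes "finite T" and "T \<noteq> {}"
  obtains n where "n \<in> T" and "\<And>i. i \<in> T \<Longrightarrow> \<bar>a i\<bar> \<le> \<bar>a n\<bar>"
proof -
  have "Max ((\<lambda>i. \<bar>a i\<bar>) ` T) \<in> (\<lambda>i. \<bar>a i\<bar>) ` T"
    using assms by simp
  then obtain n where "n \<in> T" "\<bar>a n\<bar> = Max ((\<lambda>i. \<bar>a i\<bar>) ` T)"
    by auto
  then show ?thesis
    using assms(1) that by simp
qed

lemma greedy_next_exists:
  fixes a :: "nat \<Rightarrow> real"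
  assumes "a \<longlonglongrightarrow> 0" and "finite F"
  shows "\<exists>n. n \<notin> F \<and> (\<forall>i. i \<notin> F \<longrightarrow> \<bar>a i\<bar> \<le> \<bar>a n\<bar>)"
proof (cases "\<exists>j. j \<notin> F \<and> a j \<noteq> 0")
  case True
  then obtain j where j: "j \<notin> F" "a j \<noteq> 0"
    by blast
  define T where "T = {i. i \<notin> F \<and> \<bar>a j\<bar> \<le> \<bar>a i\<bar>}"
  have "finite T"
    using finite_abs_ge_if_null[OF assms(1), of "\<bar>a j\<bar>"] j(2)
    by (auto simp: T_def intro: finite_subset[rotated])
  moreover have "j \<in> T"
    using j by (simp add: T_def)
  ultimately obtain n where n: "n \<in> T" and max: "\<And>i. i \<in> T \<Longrightarrow> \<bar>a i\<bar> \<le> \<bar>a n\<bar>"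
    using finite_set_has_abs_max[of T a] by blast
  have "\<bar>a i\<bar> \<le> \<bar>a n\<bar>" if "i \<notin> F" for i
    using max[of i] n that by (cases "\<bar>a j\<bar> \<le> \<bar>a i\<bar>") (auto simp: T_def)
  then show ?thesis
    using n by (auto simp: T_def)
next
  case False
  obtain n where "n \<notin> F"
    using ex_new_if_finite[OF infinite_UNIV_nat assms(2)] by blast
  then show ?thesis
    using False by (intro exI[of _ n]) auto
qed

lemma greedy_seq_notin:
  assumes "a \<longlonglongrightarrow> 0"
  shows "greedy_seq a k \<notin> greedy_seq a ` {..<k}"
proof -
  have "greedy_next a (greedy_seq a ` {..<k}) \<notin> greedy_seq a ` {..<k}"
    using LeastI_ex[OF greedy_next_exists[OF assms]] unfolding greedy_next_def by blast
  then show ?thesis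
    by (metis greedy_seq.simps)
qed

lemma greedy_seq_max:
  assumes "a \<longlonglongrightarrow> 0" and "i \<notin> greedy_seq a ` {..<k}"
  shows "\<bar>a i\<bar> \<le> \<bar>a (greedy_seq a k)\<bar>"
proof -
  have "\<bar>a i\<bar> \<le> \<bar>a (greedy_next a (greedy_seq a ` {..<k}))\<bar>"
    using LeastI_ex[OF greedy_next_exists[OF assms(1)]] assms(2) unfolding greedy_next_def by blast
  then show ?thesis
    by (metis greedy_seq.simps)
qed

lemma greedy_seq_least:
  assumes "n \<notin> greedy_seq a ` {..<k}" and "\<And>i. i \<notin> greedy_seq a ` {..<k} \<Longrightarrow> \<bar>a i\<bar> \<le> \<bar>a n\<bar>"
  shows "greedy_seq a k \<le> n"
proof -
  have "greedy_next a (greedy_seq a ` {..<k}) \<le> n"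
    unfolding greedy_next_def by (rule Least_le) (use assms in auto)
  then show ?thesis
    by (metis greedy_seq.simps)
qed

lemma greedy_enumeration_greedy_seq:
  assumes null: "a \<longlonglongrightarrow> 0"
  shows "greedy_enumeration a (greedy_seq a)"
  unfolding greedy_enumeration_def
proof (intro conjI allI impI)
  let ?\<rho> = "greedy_seq a"
  have later_notin: "?\<rho> k \<notin> ?\<rho> ` {..<j}" if "j \<le> k" for j k
    using greedy_seq_notin[OF null, of k] that by auto
  show inj: "inj ?\<rho>"
  proof (rule linorder_injI)
    fix j k :: nat assume "j < k"
    then show "?\<rho> j \<noteq> ?\<rho> k"
      using greedy_seq_notin[OF null, of k] by (metis imageI lessThan_iff)
  qed
  show "supp a \<subseteq> range ?\<rho>"
  proof (rule subsetI, rule ccontr)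
    fix n assume "n \<in> supp a" and "n \<notin> range ?\<rho>"
    then have "\<bar>a n\<bar> \<le> \<bar>a (?\<rho> k)\<bar>" for k
      by (intro greedy_seq_max[OF null]) auto
    then have "range ?\<rho> \<subseteq> {i. \<bar>a n\<bar> \<le> \<bar>a i\<bar>}"
      by auto
    moreover have "finite {i. \<bar>a n\<bar> \<le> \<bar>a i\<bar>}"
      using \<open>n \<in> supp a\<close> by (intro finite_abs_ge_if_null[OF null]) (simp add: supp_def)
    ultimately show False
      using range_inj_infinite[OF inj] finite_subset by blast
  qed
  fix j k :: nat assume "j < k"
  then have le: "\<bar>a (?\<rho> k)\<bar> \<le> \<bar>a (?\<rho> j)\<bar>"
    by (intro greedy_seq_max[OF null] later_notin) simp
  show "greedy_prec a (?\<rho> j) (?\<rho> k)"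
  proof (cases "\<bar>a (?\<rho> k)\<bar> = \<bar>a (?\<rho> j)\<bar>")
    case True
    have "?\<rho> j \<le> ?\<rho> k"
      using later_notin[of j k] \<open>j < k\<close> greedy_seq_max[OF null] True
      by (intro greedy_seq_least) auto
    moreover have "?\<rho> j \<noteq> ?\<rho> k"
      using inj \<open>j < k\<close> by (metis injD less_irrefl)
    ultimately show ?thesis
      using True by (simp add: greedy_prec_def)
  next
    case False
    then show ?thesis
      using le by (auto simp: greedy_prec_def)
  qed
qed

lemma greedy_predecessors_enumeration:
  assumes \<rho>: "greedy_enumeration a \<rho>" and nz: "a (\<rho> k) \<noteq> 0"
  shows "{i. greedy_prec a i (\<rho> k)} = \<rho> ` {..<k}"
proof
  have prec: "greedy_prec a (\<rho> j) (\<rho> k)" if "j < k" for j k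
    using \<rho> that by (simp add: greedy_enumeration_def)
  then show "\<rho> ` {..<k} \<subseteq> {i. greedy_prec a i (\<rho> k)}"
    by auto
  show "{i. greedy_prec a i (\<rho> k)} \<subseteq> \<rho> ` {..<k}"
  proof
    fix i assume "i \<in> {i. greedy_prec a i (\<rho> k)}"
    then have p: "greedy_prec a i (\<rho> k)"
      by simp
    then have "i \<in> supp a"
      using greedy_prec_nonzero nz by (simp add: supp_def)
    then obtain j where j: "i = \<rho> j"
      using \<rho> by (auto simp: greedy_enumeration_def)
    have "\<not> k \<le> j"
      using p prec[of k j] greedy_prec_irrefl greedy_prec_asym j
      by (metis le_neq_implies_less)
    then show "i \<in> \<rho> ` {..<k}"
      using j by simp
  qed
qed

lemma greedy_enumeration_image:
  assumes \<rho>: "greedy_enumeration a \<rho>"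
  shows "\<rho> ` {..<m} \<inter> supp a = greedy_set a m"
proof -
  have inj: "inj \<rho>" and sub: "supp a \<subseteq> range \<rho>"
    using \<rho> by (simp_all add: greedy_enumeration_def)
  have rank: "greedy_rank a (\<rho> k) = k" if "a (\<rho> k) \<noteq> 0" for k
    using greedy_predecessors_enumeration[OF \<rho> that] inj
    by (simp add: greedy_rank_def card_image inj_on_subset)
  show ?thesis
  proof (intro set_eqI iffI)
    fix n assume "n \<in> \<rho> ` {..<m} \<inter> supp a"
    then show "n \<in> greedy_set a m"
      using rank by (auto simp: greedy_set_def supp_def)
  next
    fix n assume n: "n \<in> greedy_set a m"
    then obtain k where "n = \<rho> k"
      using sub greedy_set_subset_supp by blast
    then show "n \<in> \<rho> ` {..<m} \<inter> supp a"
      using n rank by (auto simp: greedy_set_def supp_def)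
  qed
qed

section \<open>Basic sequences\<close>

locale basic_sequence_space =
  fixes e :: "nat \<Rightarrow> 'a::banach"
  assumes basic: "basic_sequence e"
begin

abbreviation E :: "'a set" where "E \<equiv> cspan e"

definition coord_proj :: "nat set \<Rightarrow> 'a \<Rightarrow> 'a" where
  "coord_proj J x = (\<Sum>n\<in>J. coeff e x n *\<^sub>R e n)"

abbreviation partial_sum :: "nat \<Rightarrow> 'a \<Rightarrow> 'a" where
  "partial_sum N \<equiv> coord_proj {..<N}"

lemma e_nonzero: "e n \<noteq> 0"
  using basic by (simp add: basic_sequence_def)

lemma closed_E: "closed E"
  by (simp add: cspan_def)

lemma sum_scaleR_e_in_E: "(\<Sum>n\<in>F. b n *\<^sub>R e n) \<in> E"
  unfolding cspan_def
  by (intro subsetD[OF closure_subset] span_sum span_scale span_base) simp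

lemma coord_proj_in_E: "coord_proj J x \<in> E"
  unfolding coord_proj_def by (rule sum_scaleR_e_in_E)

lemma limit_in_E: "f \<longlonglongrightarrow> z \<Longrightarrow> (\<And>n. f n \<in> E) \<Longrightarrow> z \<in> E"
  using Lim_in_closed_set[OF closed_E] by (metis always_eventually sequentially_bot)

lemma partial_sum_tendsto: "x \<in> E \<Longrightarrow> (\<lambda>N. partial_sum N x) \<longlonglongrightarrow> x"
  using basic theI'[of "\<lambda>a. (\<lambda>N. \<Sum>n<N. a n *\<^sub>R e n) \<longlonglongrightarrow> x"]
  by (simp add: basic_sequence_def coord_proj_def coeff_def)

lemma coeff_eqI:
  assumes "x \<in> E" and "(\<lambda>N. \<Sum>n<N. a n *\<^sub>R e n) \<longlonglongrightarrow> x"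
  shows "coeff e x = a"
  unfolding coeff_def
  using basic assms by (intro the1_equality) (auto simp: basic_sequence_def)

lemma lincomb_in_E:
  assumes "x \<in> E" and "y \<in> E"
  shows "a *\<^sub>R x + b *\<^sub>R y \<in> E"
    and "coeff e (a *\<^sub>R x + b *\<^sub>R y) = (\<lambda>n. a * coeff e x n + b * coeff e y n)"
proof -
  have lim: "(\<lambda>N. \<Sum>n<N. (a * coeff e x n + b * coeff e y n) *\<^sub>R e n) \<longlonglongrightarrow> a *\<^sub>R x + b *\<^sub>R y"
    using tendsto_add[OF tendsto_scaleR[OF tendsto_const partial_sum_tendsto[OF assms(1)]]
        tendsto_scaleR[OF tendsto_const partial_sum_tendsto[OF assms(2)]]]
    by (simp add: coord_proj_def scaleR_add_left sum.distrib scaleR_sum_right)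
  show mem: "a *\<^sub>R x + b *\<^sub>R y \<in> E"
    by (rule limit_in_E[OF lim sum_scaleR_e_in_E])
  show "coeff e (a *\<^sub>R x + b *\<^sub>R y) = (\<lambda>n. a * coeff e x n + b * coeff e y n)"
    by (rule coeff_eqI[OF mem lim])
qed

lemma add_in_E: "x \<in> E \<Longrightarrow> y \<in> E \<Longrightarrow> x + y \<in> E"
  using lincomb_in_E(1)[of x y 1 1] by simp

lemma diff_in_E: "x \<in> E \<Longrightarrow> y \<in> E \<Longrightarrow> x - y \<in> E"
  using lincomb_in_E(1)[of x y 1 "-1"] by simp

lemma scaleR_in_E: "x \<in> E \<Longrightarrow> c *\<^sub>R x \<in> E"
  using lincomb_in_E(1)[of x x c 0] by simp

lemma zero_in_E: "0 \<in> E"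
  using sum_scaleR_e_in_E[of _ "{}"] by simp

lemma coeff_add: "x \<in> E \<Longrightarrow> y \<in> E \<Longrightarrow> coeff e (x + y) n = coeff e x n + coeff e y n"
  using lincomb_in_E(2)[of x y 1 1] by simp

lemma coeff_diff: "x \<in> E \<Longrightarrow> y \<in> E \<Longrightarrow> coeff e (x - y) n = coeff e x n - coeff e y n"
  using lincomb_in_E(2)[of x y 1 "-1"] by simp

lemma coeff_scaleR: "x \<in> E \<Longrightarrow> coeff e (c *\<^sub>R x) n = c * coeff e x n"
  using lincomb_in_E(2)[of x x c 0] by simp

lemma coeff_sum_scaleR_e:
  assumes "finite F"
  shows "coeff e (\<Sum>n\<in>F. b n *\<^sub>R e n) = restrict_seq F b"
proof (rule coeff_eqI[OF sum_scaleR_e_in_E], rule tendsto_eventually)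
  obtain M where M: "F \<subseteq> {..<M}"
    using assms finite_nat_bounded by blast
  show "\<forall>\<^sub>F N in sequentially. (\<Sum>n<N. restrict_seq F b n *\<^sub>R e n) = (\<Sum>n\<in>F. b n *\<^sub>R e n)"
    using eventually_ge_at_top[of M]
  proof eventually_elim
    case (elim N)
    then have "{..<N} \<inter> F = F"
      using M by auto
    then show ?case
      by (simp add: restrict_seq_def if_distrib[of "\<lambda>c. c *\<^sub>R _"] sum.If_cases)
  qed
qed

lemma coeff_zero: "coeff e 0 = (\<lambda>n. 0)"
  using coeff_sum_scaleR_e[of "{}" "\<lambda>_. 0"] by (simp add: restrict_seq_def fun_eq_iff)

lemma coeff_coord_proj: "finite J \<Longrightarrow> coeff e (coord_proj J x) = restrict_seq J (coeff e x)"
  unfolding coord_proj_def by (rule coeff_sum_scaleR_e)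

lemma coord_proj_lincomb:
  "x \<in> E \<Longrightarrow> y \<in> E \<Longrightarrow> coord_proj J (a *\<^sub>R x + b *\<^sub>R y) = a *\<^sub>R coord_proj J x + b *\<^sub>R coord_proj J y"
  by (simp add: coord_proj_def lincomb_in_E(2) scaleR_add_left sum.distrib scaleR_sum_right)

lemma coord_proj_add: "x \<in> E \<Longrightarrow> y \<in> E \<Longrightarrow> coord_proj J (x + y) = coord_proj J x + coord_proj J y"
  using coord_proj_lincomb[of x y J 1 1] by simp

lemma coord_proj_diff: "x \<in> E \<Longrightarrow> y \<in> E \<Longrightarrow> coord_proj J (x - y) = coord_proj J x - coord_proj J y"
  using coord_proj_lincomb[of x y J 1 "-1"] by simp

lemma coord_proj_scaleR: "x \<in> E \<Longrightarrow> coord_proj J (c *\<^sub>R x) = c *\<^sub>R coord_proj J x"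
  using coord_proj_lincomb[of x x J c 0] by simp

lemma coord_proj_zero: "coord_proj J 0 = 0"
  by (simp add: coord_proj_def coeff_zero)

lemma partial_sum_Suc_diff: "partial_sum (Suc n) x - partial_sum n x = coeff e x n *\<^sub>R e n"
  by (simp add: coord_proj_def)

lemma coord_proj_Int_supp: "finite J \<Longrightarrow> coord_proj J x = coord_proj (J \<inter> supp (coeff e x)) x"
  unfolding coord_proj_def by (rule sum.mono_neutral_right) (auto simp: supp_def)

lemma coord_proj_Int_Diff: "finite J \<Longrightarrow> coord_proj J x = coord_proj (J \<inter> S) x + coord_proj (J - S) x"
  unfolding coord_proj_def by (rule sum.Int_Diff)

lemma coord_proj_restrict:
  assumes "coeff e z = restrict_seq S (coeff e x)" and "finite J"
  shows "coord_proj J z = coord_proj (J \<inter> S) x"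
  unfolding coord_proj_def assms(1) sum.inter_restrict[OF assms(2)]
  by (intro sum.cong) (auto simp: restrict_seq_def)

lemma coeff_abs_mult_norm_le:
  "\<bar>coeff e x n\<bar> * norm (e n) \<le> norm (partial_sum (Suc n) x) + norm (partial_sum n x)"
proof -
  have "\<bar>coeff e x n\<bar> * norm (e n) = norm (partial_sum (Suc n) x - partial_sum n x)"
    by (simp only: partial_sum_Suc_diff norm_scaleR real_norm_def)
  then show ?thesis
    using norm_triangle_ineq4[of "partial_sum (Suc n) x" "partial_sum n x"] by simp
qed

lemma sum_in_E:
  assumes "\<And>i. i \<in> A \<Longrightarrow> f i \<in> E"
  shows "sum f A \<in> E" and "coeff e (sum f A) = (\<lambda>n. \<Sum>i\<in>A. coeff e (f i) n)"
proof -
  have "sum f A \<in> E \<and> coeff e (sum f A) = (\<lambda>n. \<Sum>i\<in>A. coeff e (f i) n)"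
    using assms
  proof (induction A rule: infinite_finite_induct)
    case (insert a A)
    then show ?case
      by (simp add: add_in_E coeff_add fun_eq_iff)
  qed (simp_all add: zero_in_E coeff_zero)
  then show "sum f A \<in> E" and "coeff e (sum f A) = (\<lambda>n. \<Sum>i\<in>A. coeff e (f i) n)"
    by simp_all
qed

end

section \<open>The basis constant\<close>

lemma Cauchy_if_dist_le_null:
  fixes X :: "nat \<Rightarrow> 'b::metric_space"
  assumes "\<And>m n. m \<le> n \<Longrightarrow> dist (X m) (X n) \<le> \<eta> m" and "\<eta> \<longlonglongrightarrow> 0"
  shows "Cauchy X"
proof (rule metric_CauchyI)
  fix \<epsilon> :: real assume "0 < \<epsilon>"
  then obtain M where M: "\<And>m. M \<le> m \<Longrightarrow> \<eta> m < \<epsilon>"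
    using LIMSEQ_D[OF assms(2)] by fastforce
  have "dist (X m) (X n) < \<epsilon>" if "M \<le> m" "M \<le> n" for m n
    using assms(1)[of m n] assms(1)[of n m] M[OF that(1)] M[OF that(2)]
    by (cases "m \<le> n") (auto simp: dist_commute)
  then show "\<exists>M. \<forall>m\<ge>M. \<forall>n\<ge>M. dist (X m) (X n) < \<epsilon>"
    by blast
qed

lemma Cauchy_if_uniformly_approximated:
  fixes T :: "nat \<Rightarrow> 'b::metric_space"
  assumes "\<And>J. Cauchy (S J)" and "\<And>J N. dist (S J N) (T N) \<le> \<eta> J" and "\<eta> \<longlonglongrightarrow> 0"
  shows "Cauchy T"
proof (rule metric_CauchyI)
  fix \<epsilon> :: real assume "0 < \<epsilon>"
  then have "eventually (\<lambda>J. \<eta> J < \<epsilon> / 4) sequentially"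
    by (intro order_tendstoD(2)[OF assms(3)]) simp
  then obtain J where J: "\<eta> J < \<epsilon> / 4"
    using eventually_happens'[OF sequentially_bot] by blast
  obtain M where M: "\<And>m n. M \<le> m \<Longrightarrow> M \<le> n \<Longrightarrow> dist (S J m) (S J n) < \<epsilon> / 4"
    using metric_CauchyD[OF assms(1)[of J], of "\<epsilon> / 4"] \<open>0 < \<epsilon>\<close> by auto
  have "dist (T m) (T n) < \<epsilon>" if "M \<le> m" "M \<le> n" for m n
  proof -
    have "dist (T m) (T n) \<le> dist (S J m) (T m) + dist (S J m) (S J n) + dist (S J n) (T n)"
      using dist_triangle[of "T m" "T n" "S J m"] dist_triangle[of "S J m" "T n" "S J n"]
      by (simp add: dist_commute)
    then show ?thesis
      using assms(2)[of J m] assms(2)[of J n] M[OF that] J \<open>0 < \<epsilon>\<close> by linarith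
  qed
  then show "\<exists>M. \<forall>m\<ge>M. \<forall>n\<ge>M. dist (T m) (T n) < \<epsilon>"
    by blast
qed

context basic_sequence_space
begin

definition partial_sum_ball :: "real \<Rightarrow> 'a set" where
  "partial_sum_ball t = {x \<in> E. \<forall>N. norm (partial_sum N x) \<le> t}"

lemma partial_sum_ball_subset_E: "partial_sum_ball t \<subseteq> E"
  by (auto simp: partial_sum_ball_def)

lemma scaleR_partial_sum_ball:
  assumes "x \<in> partial_sum_ball t"
  shows "c *\<^sub>R x \<in> partial_sum_ball (\<bar>c\<bar> * t)"
proof -
  have x: "x \<in> E" "\<And>N. norm (partial_sum N x) \<le> t"
    using assms by (simp_all add: partial_sum_ball_def)
  have "norm (partial_sum N (c *\<^sub>R x)) \<le> \<bar>c\<bar> * t" for N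
    using mult_left_mono[OF x(2)[of N], of "\<bar>c\<bar>"] by (simp add: coord_proj_scaleR[OF x(1)])
  then show ?thesis
    using x(1) by (simp add: partial_sum_ball_def scaleR_in_E)
qed

lemma convex_partial_sum_ball: "convex (partial_sum_ball t)"
proof (rule convexI)
  fix x y and u v :: real
  assume x: "x \<in> partial_sum_ball t" and y: "y \<in> partial_sum_ball t"
    and uv: "0 \<le> u" "0 \<le> v" "u + v = 1"
  have "norm (partial_sum N (u *\<^sub>R x + v *\<^sub>R y)) \<le> u * t + v * t" for N
  proof -
    have "norm (partial_sum N (u *\<^sub>R x + v *\<^sub>R y))
        \<le> u * norm (partial_sum N x) + v * norm (partial_sum N y)"
      using x y uv norm_triangle_ineq[of "u *\<^sub>R partial_sum N x" "v *\<^sub>R partial_sum N y"]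
      by (simp add: partial_sum_ball_def coord_proj_lincomb[of x y])
    also have "\<dots> \<le> u * t + v * t"
      using x y uv by (intro add_mono mult_left_mono) (auto simp: partial_sum_ball_def)
    finally show ?thesis .
  qed
  then show "u *\<^sub>R x + v *\<^sub>R y \<in> partial_sum_ball t"
    using x y uv by (simp add: partial_sum_ball_def lincomb_in_E distrib_right[symmetric])
qed

lemma E_subset_Union_partial_sum_balls: "x \<in> E \<Longrightarrow> \<exists>k::nat. x \<in> partial_sum_ball k"
proof -
  assume x: "x \<in> E"
  then have "Bseq (\<lambda>N. partial_sum N x)"
    using partial_sum_tendsto convergent_imp_Bseq convergent_def by blast
  then obtain K where "\<And>N. norm (partial_sum N x) \<le> K"
    unfolding Bseq_def by blast
  then have "x \<in> partial_sum_ball (real (nat \<lceil>K\<rceil>))"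
    using x by (auto simp: partial_sum_ball_def intro: order_trans[OF _ real_nat_ceiling_ge])
  then show ?thesis ..
qed

lemma closure_partial_sum_ball_has_interior:
  obtains r x\<^sub>0 t where "r > 0" "x\<^sub>0 \<in> E"
    "\<And>y. y \<in> E \<Longrightarrow> dist y x\<^sub>0 < r \<Longrightarrow> y \<in> closure (partial_sum_ball t)"
proof (rule ccontr)
  assume no_interior: "\<not> thesis"
  let ?X = "top_of_set E"
  let ?\<G> = "range (\<lambda>k::nat. closure (partial_sum_ball k))"
  have "?X interior_of \<Union>?\<G> = {}"
  proof (rule Baire_category_alt)
    have "completely_metrizable_space ?X"
      by (rule completely_metrizable_space_closedin[OF completely_metrizable_space_euclidean])
        (simp add: closed_closedin[symmetric] closed_E)
    then show "completely_metrizable_space ?X \<or> locally_compact_space ?X \<and> regular_space ?X" ..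
    fix T assume "T \<in> ?\<G>"
    then obtain k :: nat where T: "T = closure (partial_sum_ball k)"
      by blast
    have "closure (partial_sum_ball k) \<subseteq> E"
      by (rule closure_minimal[OF partial_sum_ball_subset_E closed_E])
    then have "closedin ?X T"
      unfolding closedin_closed T by (intro exI[of _ "closure (partial_sum_ball k)"]) auto
    moreover have "?X interior_of T = {}"
    proof (rule ccontr)
      assume "?X interior_of T \<noteq> {}"
      then obtain x U where "openin ?X U" "x \<in> U" "U \<subseteq> T"
        unfolding interior_of_def by blast
      then obtain r where "x \<in> E" "r > 0" "\<And>y. y \<in> E \<Longrightarrow> dist y x < r \<Longrightarrow> y \<in> T"
        unfolding openin_euclidean_subtopology_iff by blast
      then show False
        using no_interior that[of r x "real k"] T by blast
    qed
    ultimately show "closedin ?X T \<and> ?X interior_of T = {}" ..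
  qed simp
  moreover have "E \<subseteq> \<Union>?\<G>"
    using E_subset_Union_partial_sum_balls closure_subset by blast
  then have "?X interior_of E \<subseteq> ?X interior_of \<Union>?\<G>"
    by (rule interior_of_mono)
  moreover have "?X interior_of E = E"
    by (metis interior_of_topspace topspace_euclidean_subtopology)
  ultimately show False
    using zero_in_E by blast
qed

lemma closure_partial_sum_ball_contains_ball:
  obtains r t where "r > 0"
    "\<And>y. y \<in> E \<Longrightarrow> norm y < r \<Longrightarrow> y \<in> closure (partial_sum_ball t)"
proof -
  obtain r x\<^sub>0 t where r: "r > 0" and x\<^sub>0: "x\<^sub>0 \<in> E"
    and near: "\<And>y. y \<in> E \<Longrightarrow> dist y x\<^sub>0 < r \<Longrightarrow> y \<in> closure (partial_sum_ball t)"
    by (rule closure_partial_sum_ball_has_interior) blast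
  let ?C = "closure (partial_sum_ball t)"
  have symmetric: "- z \<in> ?C" if "z \<in> ?C" for z
  proof -
    have "(-1) *\<^sub>R z \<in> closure ((*\<^sub>R) (-1) ` partial_sum_ball t)"
      using that closure_scaleR[of "-1" "partial_sum_ball t"] by blast
    moreover have "(*\<^sub>R) (-1) ` partial_sum_ball t \<subseteq> partial_sum_ball t"
      using scaleR_partial_sum_ball[of _ t "-1"] by auto
    ultimately have "(-1) *\<^sub>R z \<in> ?C"
      using closure_mono by blast
    then show ?thesis
      by simp
  qed
  have "y \<in> ?C" if y: "y \<in> E" "norm y < r" for y
  proof -
    have "x\<^sub>0 + y \<in> ?C"
      using near[of "x\<^sub>0 + y"] y x\<^sub>0 by (simp add: add_in_E dist_norm)
    moreover have "x\<^sub>0 - y \<in> ?C"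
      using near[of "x\<^sub>0 - y"] y x\<^sub>0 by (simp add: diff_in_E dist_norm)
    ultimately have "(1/2) *\<^sub>R (x\<^sub>0 + y) + (1/2) *\<^sub>R (- (x\<^sub>0 - y)) \<in> ?C"
      by (intro convexD[OF convex_closure[OF convex_partial_sum_ball]] symmetric) auto
    also have "(1/2) *\<^sub>R (x\<^sub>0 + y) + (1/2) *\<^sub>R (- (x\<^sub>0 - y)) = y"
      by (simp add: algebra_simps) (simp flip: scaleR_add_left)
    finally show ?thesis .
  qed
  then show ?thesis
    using that r by blast
qed

lemma coeff_diff_le_if_partial_sums_close:
  assumes "x \<in> E" and "y \<in> E" and "\<And>N. norm (partial_sum N x - partial_sum N y) \<le> d"
  shows "\<bar>coeff e x n - coeff e y n\<bar> * norm (e n) \<le> 2 * d"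
  using coeff_abs_mult_norm_le[of "x - y" n] assms(3)[of n] assms(3)[of "Suc n"]
  by (simp add: coeff_diff[OF assms(1,2)] coord_proj_diff[OF assms(1,2)])

lemma partial_sums_uniform_Cauchy_limit:
  assumes g: "\<And>J. g J \<in> E" and \<eta>: "\<eta> \<longlonglongrightarrow> 0"
    and Cauchy: "\<And>J J' N. J \<le> J' \<Longrightarrow> norm (partial_sum N (g J) - partial_sum N (g J')) \<le> \<eta> J"
  shows "\<exists>z\<in>E. \<forall>J N. norm (partial_sum N (g J) - partial_sum N z) \<le> \<eta> J"
proof -
  have "Cauchy (\<lambda>J. coeff e (g J) n)" for n
  proof (rule Cauchy_if_dist_le_null)
    show "(\<lambda>J. 2 * \<eta> J / norm (e n)) \<longlonglongrightarrow> 0"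
      using tendsto_divide_zero[OF tendsto_mult_right_zero[OF \<eta>]] by simp
    fix J J' :: nat assume "J \<le> J'"
    then have "\<bar>coeff e (g J) n - coeff e (g J') n\<bar> * norm (e n) \<le> 2 * \<eta> J"
      by (intro coeff_diff_le_if_partial_sums_close g Cauchy)
    then show "dist (coeff e (g J) n) (coeff e (g J') n) \<le> 2 * \<eta> J / norm (e n)"
      using e_nonzero[of n] by (simp add: dist_real_def pos_le_divide_eq)
  qed
  then have "\<forall>n. \<exists>l. (\<lambda>J. coeff e (g J) n) \<longlonglongrightarrow> l"
    by (simp add: Cauchy_convergent_iff convergent_def)
  then obtain b where b: "\<And>n. (\<lambda>J. coeff e (g J) n) \<longlonglongrightarrow> b n"
    by metis
  define T where "T N = (\<Sum>n<N. b n *\<^sub>R e n)" for N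
  have T_bound: "norm (partial_sum N (g J) - T N) \<le> \<eta> J" for N J
  proof (rule LIMSEQ_le_const2)
    show "(\<lambda>J'. norm (partial_sum N (g J) - partial_sum N (g J'))) \<longlonglongrightarrow> norm (partial_sum N (g J) - T N)"
      unfolding coord_proj_def T_def by (intro tendsto_intros b)
    show "\<exists>M. \<forall>J'\<ge>M. norm (partial_sum N (g J) - partial_sum N (g J')) \<le> \<eta> J"
      using Cauchy by blast
  qed
  have "Cauchy T"
  proof (rule Cauchy_if_uniformly_approximated[of "\<lambda>J N. partial_sum N (g J)" T \<eta>])
    show "Cauchy (\<lambda>N. partial_sum N (g J))" for J
      using partial_sum_tendsto[OF g] by (rule LIMSEQ_imp_Cauchy)
    show "dist (partial_sum N (g J)) (T N) \<le> \<eta> J" for J N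
      using T_bound by (simp add: dist_norm)
  qed (rule \<eta>)
  then obtain z where z: "T \<longlonglongrightarrow> z"
    using Cauchy_convergent_iff convergent_def by blast
  have z_E: "z \<in> E"
    by (rule limit_in_E[OF z]) (simp add: T_def sum_scaleR_e_in_E)
  then have "coeff e z = b"
    using z unfolding T_def by (rule coeff_eqI)
  then have "partial_sum N z = T N" for N
    by (simp add: coord_proj_def T_def)
  then show ?thesis
    using z_E T_bound by (intro bexI[of _ z]) auto
qed

lemma norm_le_if_partial_sums_le:
  assumes "x \<in> E" and "\<And>N. norm (partial_sum N x) \<le> c"
  shows "norm x \<le> c"
  using LIMSEQ_le_const2[OF tendsto_norm[OF partial_sum_tendsto[OF assms(1)]]] assms(2) by blast

lemma approximating_series:
  assumes approx: "\<And>\<rho> j. \<rho> \<in> E \<Longrightarrow> norm \<rho> < r / 2 ^ j \<Longrightarrow>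
      \<exists>f\<in>partial_sum_ball (t / 2 ^ j). norm (\<rho> - f) < r / 2 ^ Suc j"
    and y: "y \<in> E" "norm y < r"
  obtains d where "\<And>j. d j \<in> partial_sum_ball (t / 2 ^ j)" "\<And>J. norm (y - (\<Sum>j<J. d j)) < r / 2 ^ J"
proof -
  obtain f where f: "\<And>\<rho> j. \<rho> \<in> E \<Longrightarrow> norm \<rho> < r / 2 ^ j \<Longrightarrow>
      f \<rho> j \<in> partial_sum_ball (t / 2 ^ j) \<and> norm (\<rho> - f \<rho> j) < r / 2 ^ Suc j"
    using approx by metis
  define res where "res = rec_nat y (\<lambda>j \<rho>. \<rho> - f \<rho> j)"
  have res_0: "res 0 = y" and res_Suc: "res (Suc j) = res j - f (res j) j" for j
    by (simp_all add: res_def)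
  have res: "res j \<in> E \<and> norm (res j) < r / 2 ^ j" for j
  proof (induction j)
    case (Suc j)
    then show ?case
      using f[of "res j" j] partial_sum_ball_subset_E by (auto simp: res_Suc intro!: diff_in_E)
  qed (simp add: res_0 y)
  define d where "d j = f (res j) j" for j
  have res_eq: "res J = y - (\<Sum>j<J. d j)" for J
    by (induction J) (simp_all add: res_0 res_Suc d_def)
  have "d j \<in> partial_sum_ball (t / 2 ^ j)" for j
    using f res by (simp add: d_def)
  moreover have "norm (y - (\<Sum>j<J. d j)) < r / 2 ^ J" for J
    using res[of J] by (simp add: res_eq)
  ultimately show ?thesis
    by (rule that)
qed

lemma norm_partial_sum_series_diff_le:
  assumes d: "\<And>j. d j \<in> partial_sum_ball (t / 2 ^ j)" and "J \<le> J'"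
  shows "norm (partial_sum N (\<Sum>j<J. d j) - partial_sum N (\<Sum>j<J'. d j)) \<le> 2 * t / 2 ^ J - 2 * t / 2 ^ J'"
  using \<open>J \<le> J'\<close>
proof (induction J' rule: dec_induct)
  case (step J')
  let ?g = "\<lambda>J. \<Sum>j<J. d j"
  have d_E: "d j \<in> E" for j
    using d partial_sum_ball_subset_E by blast
  then have g_E: "?g J \<in> E" for J
    by (intro sum_in_E)
  have "norm (partial_sum N (?g J) - partial_sum N (?g (Suc J')))
      \<le> norm (partial_sum N (?g J) - partial_sum N (?g J')) + norm (partial_sum N (d J'))"
    using norm_triangle_ineq4[of "partial_sum N (?g J) - partial_sum N (?g J')" "partial_sum N (d J')"]
    by (simp add: coord_proj_add g_E d_E algebra_simps)
  also have "\<dots> \<le> (2 * t / 2 ^ J - 2 * t / 2 ^ J') + t / 2 ^ J'"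
    using step.IH d[of J'] by (intro add_mono) (auto simp: partial_sum_ball_def)
  also have "\<dots> = 2 * t / 2 ^ J - 2 * t / 2 ^ Suc J'"
    by (simp add: field_simps)
  finally show ?case .
qed simp

text \<open>The iteration from the proof of the open mapping theorem, for the norm
  \<open>sup\<^sub>N \<parallel>S\<^sub>N x\<parallel>\<close>: its balls are the \<open>partial_sum_ball t\<close>, and its completeness is
  \<open>partial_sums_uniform_Cauchy_limit\<close>.\<close>
lemma partial_sum_ball_if_approximable:
  assumes approx: "\<And>\<rho> j. \<rho> \<in> E \<Longrightarrow> norm \<rho> < r / 2 ^ j \<Longrightarrow>
      \<exists>f\<in>partial_sum_ball (t / 2 ^ j). norm (\<rho> - f) < r / 2 ^ Suc j"
    and t: "0 \<le> t" and y: "y \<in> E" "norm y < r"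
  shows "y \<in> partial_sum_ball (2 * t)"
proof -
  obtain d where d: "\<And>j. d j \<in> partial_sum_ball (t / 2 ^ j)"
    and close: "\<And>J. norm (y - (\<Sum>j<J. d j)) < r / 2 ^ J"
    using approximating_series[OF approx y] by metis
  have d_E: "d j \<in> E" for j
    using d partial_sum_ball_subset_E by blast
  define g where "g J = (\<Sum>j<J. d j)" for J
  have g_E: "g J \<in> E" for J
    unfolding g_def by (intro sum_in_E d_E)
  define \<eta> where "\<eta> J = 2 * t / 2 ^ J" for J :: nat
  have \<eta>: "\<eta> \<longlonglongrightarrow> 0"
    unfolding \<eta>_def by (rule LIMSEQ_divide_realpow_zero) simp
  have g_Cauchy: "norm (partial_sum N (g J) - partial_sum N (g J')) \<le> \<eta> J" if "J \<le> J'" for J J' N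
  proof -
    have "0 \<le> 2 * t / 2 ^ J'"
      using t by simp
    then show ?thesis
      using norm_partial_sum_series_diff_le[OF d that, of N] by (simp add: g_def \<eta>_def)
  qed
  obtain z where z_E: "z \<in> E" and z: "\<And>J N. norm (partial_sum N (g J) - partial_sum N z) \<le> \<eta> J"
    using partial_sums_uniform_Cauchy_limit[OF g_E \<eta> g_Cauchy] by auto
  have "norm (g J - z) \<le> \<eta> J" for J
  proof (rule norm_le_if_partial_sums_le)
    show "g J - z \<in> E"
      by (rule diff_in_E[OF g_E z_E])
    show "norm (partial_sum N (g J - z)) \<le> \<eta> J" for N
      using z[where J=J and N=N] by (simp only: coord_proj_diff[OF g_E z_E])
  qed
  then have "(\<lambda>J. g J - z) \<longlonglongrightarrow> 0"
    by (intro Lim_null_comparison[OF always_eventually \<eta>] allI)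
  then have "g \<longlonglongrightarrow> z"
    by (rule LIM_zero_cancel)
  moreover have "norm (g J - y) \<le> r / 2 ^ J" for J
    using close[of J] by (simp add: g_def norm_minus_commute)
  then have "(\<lambda>J. g J - y) \<longlonglongrightarrow> 0"
    by (intro Lim_null_comparison[OF always_eventually LIMSEQ_divide_realpow_zero[of 2 r]] allI) simp_all
  then have "g \<longlonglongrightarrow> y"
    by (rule LIM_zero_cancel)
  ultimately have "z = y"
    by (rule LIMSEQ_unique)
  then have "norm (partial_sum N y) \<le> 2 * t" for N
    using z[where J=0 and N=N] by (simp add: g_def coord_proj_zero \<eta>_def)
  then show ?thesis
    using y(1) by (simp add: partial_sum_ball_def)
qed

lemma partial_sum_ball_contains_ball:
  obtains r t where "r > 0" "\<And>y. y \<in> E \<Longrightarrow> norm y < r \<Longrightarrow> y \<in> partial_sum_ball t"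
proof -
  obtain r t where r: "r > 0"
    and C: "\<And>y. y \<in> E \<Longrightarrow> norm y < r \<Longrightarrow> y \<in> closure (partial_sum_ball t)"
    by (rule closure_partial_sum_ball_contains_ball) blast
  have "0 \<in> closure (partial_sum_ball t)"
    using C[OF zero_in_E] r by simp
  then obtain w where "w \<in> partial_sum_ball t"
    using closure_empty by fastforce
  then have "norm (partial_sum 0 w) \<le> t"
    unfolding partial_sum_ball_def by blast
  then have t: "0 \<le> t"
    by (simp add: coord_proj_def)
  have "\<exists>f\<in>partial_sum_ball (t / 2 ^ j). norm (\<rho> - f) < r / 2 ^ Suc j"
    if \<rho>: "\<rho> \<in> E" "norm \<rho> < r / 2 ^ j" for \<rho> j
  proof -
    have "norm ((2 ^ j) *\<^sub>R \<rho>) < r"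
      using \<rho>(2) by (simp add: field_simps)
    then have "(2 ^ j) *\<^sub>R \<rho> \<in> closure (partial_sum_ball t)"
      using \<rho>(1) by (intro C scaleR_in_E)
    then have "\<rho> \<in> (*\<^sub>R) (1 / 2 ^ j) ` closure (partial_sum_ball t)"
      using imageI[of "(2 ^ j) *\<^sub>R \<rho>" _ "(*\<^sub>R) (1 / 2 ^ j)"] by simp
    also have "\<dots> = closure ((*\<^sub>R) (1 / 2 ^ j) ` partial_sum_ball t)"
      by (rule closure_scaleR)
    also have "\<dots> \<subseteq> closure (partial_sum_ball (t / 2 ^ j))"
      by (rule closure_mono) (use scaleR_partial_sum_ball[of _ t "1 / 2 ^ j"] in auto)
    finally have "\<rho> \<in> closure (partial_sum_ball (t / 2 ^ j))" .
    moreover have "0 < r / 2 ^ Suc j"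
      using r by simp
    ultimately show ?thesis
      unfolding closure_approachable by (metis dist_commute dist_norm)
  qed
  then show ?thesis
    using that[of r "2 * t"] r partial_sum_ball_if_approximable[OF _ t] by blast
qed

theorem partial_sums_uniformly_bounded:
  obtains K where "\<And>x N. x \<in> E \<Longrightarrow> norm (partial_sum N x) \<le> K * norm x"
proof -
  obtain r t where r: "r > 0" and ball: "\<And>y. y \<in> E \<Longrightarrow> norm y < r \<Longrightarrow> y \<in> partial_sum_ball t"
    using partial_sum_ball_contains_ball by blast
  have "norm (partial_sum N x) \<le> (2 * t / r) * norm x" if x: "x \<in> E" for x N
  proof (cases "x = 0")
    case False
    define s where "s = r / (2 * norm x)"
    have s: "s > 0" "norm (s *\<^sub>R x) < r"
      using r False by (simp_all add: s_def)
    then have "norm (partial_sum N (s *\<^sub>R x)) \<le> t"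
      using ball[of "s *\<^sub>R x"] x by (simp add: partial_sum_ball_def scaleR_in_E)
    then have "s * norm (partial_sum N x) \<le> t"
      using s by (simp add: coord_proj_scaleR[OF x])
    then show ?thesis
      using s False by (simp add: s_def field_simps)
  qed (simp add: coord_proj_zero)
  then show ?thesis
    using that by blast
qed

end

section \<open>Greedy sums\<close>

locale bounded_below_basic_sequence = basic_sequence_space +
  assumes bounded_below: "\<exists>c>0. \<forall>n. c \<le> norm (e n)"
begin

lemma coeff_tendsto_zero:
  assumes x: "x \<in> E"
  shows "coeff e x \<longlonglongrightarrow> 0"
proof -
  obtain c where c: "c > 0" "\<And>n. c \<le> norm (e n)"
    using bounded_below by blast
  have bound: "norm (coeff e x n) \<le> norm (partial_sum (Suc n) x - partial_sum n x) / c" for n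
    using mult_left_mono[OF c(2)[of n] abs_ge_zero[of "coeff e x n"]] c(1)
    by (simp add: partial_sum_Suc_diff pos_le_divide_eq mult.commute)
  have "(\<lambda>n. norm (partial_sum (Suc n) x - partial_sum n x) / c) \<longlonglongrightarrow> 0"
    using tendsto_divide_zero[OF tendsto_norm_zero[OF LIM_zero[OF
          tendsto_diff[OF LIMSEQ_Suc[OF partial_sum_tendsto[OF x]] partial_sum_tendsto[OF x]]]]]
    by simp
  then show ?thesis
    by (rule Lim_null_comparison[OF always_eventually[OF allI[OF bound]]])
qed

lemma coeff_bounded:
  obtains D where "0 \<le> D" "\<And>x n. x \<in> E \<Longrightarrow> \<bar>coeff e x n\<bar> \<le> D * norm x"
proof -
  obtain K where K: "\<And>x N. x \<in> E \<Longrightarrow> norm (partial_sum N x) \<le> K * norm x"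
    using partial_sums_uniformly_bounded by blast
  obtain c where c: "c > 0" "\<And>n. c \<le> norm (e n)"
    using bounded_below by blast
  have "\<bar>coeff e x n\<bar> \<le> max 0 (2 * K / c) * norm x" if x: "x \<in> E" for x n
  proof -
    have "\<bar>coeff e x n\<bar> * c \<le> \<bar>coeff e x n\<bar> * norm (e n)"
      using c(2) by (simp add: mult_left_mono)
    also have "\<dots> \<le> 2 * K * norm x"
      using coeff_abs_mult_norm_le[of x n] K[OF x, of n] K[OF x, of "Suc n"] by simp
    finally have "\<bar>coeff e x n\<bar> \<le> (2 * K / c) * norm x"
      using c(1) by (simp add: field_simps)
    also have "\<dots> \<le> max 0 (2 * K / c) * norm x"
      by (intro mult_right_mono) simp_all
    finally show ?thesis .
  qed
  then show ?thesis
    using that[of "max 0 (2 * K / c)"] by simp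
qed

lemma greedy_enumeration_greedy_ordering:
  assumes "x \<in> E"
  shows "greedy_enumeration (coeff e x) (greedy_ordering e x)"
proof -
  have "is_natural_greedy_ordering e x (greedy_seq (coeff e x))"
    using greedy_enumeration_greedy_seq[OF coeff_tendsto_zero[OF assms]]
    by (simp add: is_natural_greedy_ordering_iff)
  then have "is_natural_greedy_ordering e x (greedy_ordering e x)"
    unfolding greedy_ordering_def by (rule someI[where P = "is_natural_greedy_ordering e x"])
  then show ?thesis
    by (simp add: is_natural_greedy_ordering_iff)
qed

lemma greedy_sum_eq_coord_proj:
  assumes x: "x \<in> E"
  shows "greedy_sum e m x = coord_proj (greedy_set (coeff e x) m) x"
proof -
  let ?\<rho> = "greedy_ordering e x" and ?g = "\<lambda>n. coeff e x n *\<^sub>R e n"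
  have \<rho>: "greedy_enumeration (coeff e x) ?\<rho>"
    by (rule greedy_enumeration_greedy_ordering[OF x])
  then have "inj ?\<rho>"
    by (simp add: greedy_enumeration_def)
  then have "greedy_sum e m x = sum ?g (?\<rho> ` {..<m})"
    by (simp add: greedy_sum_def sum.reindex inj_on_subset)
  also have "\<dots> = sum ?g (?\<rho> ` {..<m} \<inter> supp (coeff e x))"
    by (rule sum.mono_neutral_right) (auto simp: supp_def)
  also have "\<dots> = coord_proj (greedy_set (coeff e x) m) x"
    by (simp add: greedy_enumeration_image[OF \<rho>] coord_proj_def)
  finally show ?thesis .
qed

lemma coord_proj_greedy_closed:
  assumes "x \<in> E" and "greedy_closed (coeff e x) I"
  shows "coord_proj I x = greedy_sum e (card I) x"
  by (simp only: greedy_sum_eq_coord_proj[OF assms(1)]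
      greedy_set_card_eq[OF coeff_tendsto_zero[OF assms(1)] assms(2)])

lemma greedy_sum_scaleR:
  assumes x: "x \<in> E"
  shows "greedy_sum e n (s *\<^sub>R x) = s *\<^sub>R greedy_sum e n x"
proof (cases "s = 0")
  case True
  then show ?thesis
    using greedy_sum_eq_coord_proj[OF zero_in_E] by (simp add: coord_proj_zero)
next
  case False
  have "coeff e (s *\<^sub>R x) = (\<lambda>n. s * coeff e x n)"
    by (simp add: coeff_scaleR[OF x] fun_eq_iff)
  then have "greedy_set (coeff e (s *\<^sub>R x)) n = greedy_set (coeff e x) n"
    by (simp add: greedy_set_scale[OF False])
  then show ?thesis
    by (simp add: greedy_sum_eq_coord_proj x scaleR_in_E coord_proj_scaleR)
qed

lemma greedy_sum_of_zero: "greedy_sum e n 0 = 0"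
  using greedy_sum_scaleR[OF zero_in_E, of n 0] by simp

lemma greedy_sum_tail:
  assumes x: "x \<in> E" and head: "{..<N} \<inter> supp (coeff e x) \<subseteq> greedy_set (coeff e x) m"
  shows "\<exists>k\<le>m. x - greedy_sum e m x = (x - partial_sum N x) - greedy_sum e k (x - partial_sum N x)"
proof -
  let ?a = "coeff e x" and ?z = "x - partial_sum N x"
  let ?G = "greedy_set ?a m"
  let ?I = "?G \<inter> - {..<N}"
  have null: "?a \<longlonglongrightarrow> 0"
    by (rule coeff_tendsto_zero[OF x])
  have fin: "finite ?G"
    by (rule finite_greedy_set[OF null])
  have z: "?z \<in> E"
    using x by (simp add: diff_in_E coord_proj_in_E)
  have coeff_z: "coeff e ?z = restrict_seq (- {..<N}) ?a"
    using x by (auto simp: coeff_diff coord_proj_in_E coeff_coord_proj restrict_seq_def fun_eq_iff)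
  have "coord_proj ?G x = coord_proj (?G \<inter> {..<N}) x + coord_proj (?G - {..<N}) x"
    by (rule coord_proj_Int_Diff[OF fin])
  moreover have "?G \<inter> {..<N} = {..<N} \<inter> supp ?a"
    using head greedy_set_subset_supp by blast
  moreover have "coord_proj ({..<N} \<inter> supp ?a) x = partial_sum N x"
    by (simp add: coord_proj_Int_supp[symmetric])
  moreover have "coord_proj (?G - {..<N}) x = coord_proj ?I ?z"
    using coord_proj_restrict[OF coeff_z, of ?I] fin by (simp add: Diff_eq Int_assoc)
  moreover have "coord_proj ?I ?z = greedy_sum e (card ?I) ?z"
    using greedy_closed_restrict[OF greedy_closed_greedy_set[OF null]]
    by (intro coord_proj_greedy_closed[OF z]) (simp add: coeff_z)
  moreover have "card ?I \<le> m"
    using card_mono[OF fin, of ?I] card_greedy_set_le[OF null, of m] by simp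
  ultimately show ?thesis
    by (intro exI[of _ "card ?I"]) (simp add: greedy_sum_eq_coord_proj[OF x] algebra_simps)
qed

section \<open>Sums of separated blocks\<close>

definition separated_blocks :: "(nat \<Rightarrow> 'a) \<Rightarrow> bool" where
  "separated_blocks b \<longleftrightarrow> (\<forall>p. b p \<in> E \<and> finite (supp (coeff e (b p))))
     \<and> disjoint_family (\<lambda>p. supp (coeff e (b p)))
     \<and> (\<forall>p q i k. p < q \<longrightarrow> coeff e (b p) k \<noteq> 0 \<longrightarrow> \<bar>coeff e (b q) i\<bar> < \<bar>coeff e (b p) k\<bar>)"

lemma suminf_in_E_coeff:
  assumes b_E: "\<And>p. b p \<in> E" and summable: "summable (\<lambda>p. norm (b p))"
  shows "suminf b \<in> E" and "(\<lambda>p. coeff e (b p) i) sums coeff e (suminf b) i"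
proof -
  let ?x = "suminf b"
  have lim: "(\<lambda>J. \<Sum>p<J. b p) \<longlonglongrightarrow> ?x"
    by (rule summable_LIMSEQ[OF summable_norm_cancel[OF summable]])
  show x_E: "?x \<in> E"
    by (rule limit_in_E[OF lim]) (intro sum_in_E(1) b_E)
  obtain D where D: "\<And>x n. x \<in> E \<Longrightarrow> \<bar>coeff e x n\<bar> \<le> D * norm x"
    using coeff_bounded by blast
  have bound: "norm (coeff e ?x i - (\<Sum>p<J. coeff e (b p) i)) \<le> D * norm (?x - (\<Sum>p<J. b p))" for J
    using D[of "?x - (\<Sum>p<J. b p)" i] x_E sum_in_E[of "{..<J}" b] b_E
    by (simp add: coeff_diff diff_in_E)
  have "(\<lambda>J. D * norm (?x - (\<Sum>p<J. b p))) \<longlonglongrightarrow> 0"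
    using tendsto_mult_right_zero[OF tendsto_norm_zero[OF LIM_zero[OF lim]], of D]
    by (simp add: norm_minus_commute)
  then have "(\<lambda>J. coeff e ?x i - (\<Sum>p<J. coeff e (b p) i)) \<longlonglongrightarrow> 0"
    by (rule Lim_null_comparison[OF always_eventually[OF allI[OF bound]]])
  from tendsto_diff[OF tendsto_const[of "coeff e ?x i"] this]
  show "(\<lambda>p. coeff e (b p) i) sums coeff e ?x i"
    by (simp add: sums_def)
qed

lemma coeff_suminf_blocks:
  assumes sep: "separated_blocks b" and summable: "summable (\<lambda>p. norm (b p))"
  shows "suminf b \<in> E"
    and "\<And>p i. i \<in> supp (coeff e (b p)) \<Longrightarrow> coeff e (suminf b) i = coeff e (b p) i"
    and "supp (coeff e (suminf b)) \<subseteq> (\<Union>p. supp (coeff e (b p)))"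
proof -
  have b_E: "b p \<in> E" for p
    using sep by (simp add: separated_blocks_def)
  have disj: "disjoint_family (\<lambda>p. supp (coeff e (b p)))"
    using sep by (simp add: separated_blocks_def)
  let ?x = "suminf b"
  show "?x \<in> E"
    by (rule suminf_in_E_coeff(1)[OF b_E summable])
  have coeff_lim: "(\<lambda>J. \<Sum>p<J. coeff e (b p) i) \<longlonglongrightarrow> coeff e ?x i" for i
    using suminf_in_E_coeff(2)[OF b_E summable] by (simp add: sums_def)
  show "coeff e ?x i = coeff e (b p) i" if i: "i \<in> supp (coeff e (b p))" for p i
  proof (rule LIMSEQ_unique[OF coeff_lim tendsto_eventually])
    have "coeff e (b p') i = 0" if "p' \<noteq> p" for p'
      using disjoint_family_onD[OF disj _ _ that] i by (auto simp: supp_def)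
    then have "(\<Sum>p'<J. coeff e (b p') i) = coeff e (b p) i" if "p < J" for J
      using that by (subst sum.remove[of _ p]) auto
    then show "\<forall>\<^sub>F J in sequentially. (\<Sum>p'<J. coeff e (b p') i) = coeff e (b p) i"
      using eventually_gt_at_top[of p] by (rule eventually_mono[rotated])
  qed
  show "supp (coeff e ?x) \<subseteq> (\<Union>p. supp (coeff e (b p)))"
  proof
    fix i assume "i \<in> supp (coeff e ?x)"
    moreover have "coeff e ?x i = 0" if "i \<notin> (\<Union>p. supp (coeff e (b p)))"
      using LIMSEQ_unique[OF coeff_lim[of i]] that by (simp add: supp_def)
    ultimately show "i \<in> (\<Union>p. supp (coeff e (b p)))"
      by (auto simp: supp_def)
  qed
qed

lemma greedy_prec_blocks:
  assumes sep: "separated_blocks b" and summable: "summable (\<lambda>p. norm (b p))"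
    and prec: "greedy_prec (coeff e (suminf b)) i k"
    and k: "k \<in> supp (coeff e (b q))"
  obtains p where "p \<le> q" "i \<in> supp (coeff e (b p))"
proof -
  let ?a = "coeff e (suminf b)"
  have "?a k \<noteq> 0"
    using k coeff_suminf_blocks(2)[OF sep summable k] by (simp add: supp_def)
  then have "i \<in> supp ?a"
    using greedy_prec_nonzero[OF prec] by (simp add: supp_def)
  then obtain p where i: "i \<in> supp (coeff e (b p))"
    using coeff_suminf_blocks(3)[OF sep summable] by blast
  have "p \<le> q"
  proof (rule ccontr)
    assume "\<not> p \<le> q"
    then have "\<bar>coeff e (b p) i\<bar> < \<bar>coeff e (b q) k\<bar>"
      using sep k by (auto simp: separated_blocks_def supp_def)
    moreover have "\<bar>?a k\<bar> \<le> \<bar>?a i\<bar>"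
      by (rule greedy_prec_abs_le[OF prec])
    ultimately show False
      using coeff_suminf_blocks(2)[OF sep summable] i k by simp
  qed
  then show ?thesis
    using that i by blast
qed

lemma greedy_closed_blocks:
  assumes sep: "separated_blocks b" and summable: "summable (\<lambda>p. norm (b p))"
    and I: "greedy_closed (coeff e (b q)) I"
  shows "greedy_closed (coeff e (suminf b)) ((\<Union>p<q. supp (coeff e (b p))) \<union> I)"
  unfolding greedy_closed_def
proof (intro conjI ballI allI impI)
  let ?a = "coeff e (suminf b)" and ?J = "\<Union>p<q. supp (coeff e (b p))"
  have agree: "?a i = coeff e (b p) i" if "i \<in> supp (coeff e (b p))" for i p
    by (rule coeff_suminf_blocks(2)[OF sep summable that])
  have I_supp: "I \<subseteq> supp (coeff e (b q))"
    using I by (simp add: greedy_closed_def)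
  show "finite (?J \<union> I)"
    using sep I by (simp add: separated_blocks_def greedy_closed_def)
  show "?J \<union> I \<subseteq> supp ?a"
    using agree I_supp by (auto simp: supp_def)
  fix k i assume k: "k \<in> ?J \<union> I" and prec: "greedy_prec ?a i k"
  then consider p' where "p' < q" "k \<in> supp (coeff e (b p'))" | "k \<in> I"
    by blast
  then show "i \<in> ?J \<union> I"
  proof cases
    case 1
    obtain p where "p \<le> p'" "i \<in> supp (coeff e (b p))"
      using greedy_prec_blocks[OF sep summable prec 1(2)] by blast
    then show ?thesis
      using 1(1) by auto
  next
    case 2
    then have kq: "k \<in> supp (coeff e (b q))"
      using I_supp by blast
    obtain p where "p \<le> q" and i: "i \<in> supp (coeff e (b p))"
      using greedy_prec_blocks[OF sep summable prec kq] by blast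
    then consider "p < q" | "p = q"
      by linarith
    then show ?thesis
    proof cases
      case 2
      then have "greedy_prec (coeff e (b q)) i k"
        using prec agree[OF i] agree[OF kq] by (simp add: greedy_prec_def)
      then show ?thesis
        using I \<open>k \<in> I\<close> by (simp add: greedy_closed_def)
    qed (use i in auto)
  qed
qed

lemma greedy_sum_block_eq_diff:
  fixes q r :: nat
  assumes sep: "separated_blocks b" and summable: "summable (\<lambda>p. norm (b p))"
  defines "K \<equiv> card (\<Union>p\<le>q. supp (coeff e (b p)))"
  shows "\<exists>j j'. j \<le> K \<and> j' \<le> K \<and> greedy_sum e r (b q) = greedy_sum e j (suminf b) - greedy_sum e j' (suminf b)"
proof -
  let ?x = "suminf b" and ?J = "\<Union>p<q. supp (coeff e (b p))"
  let ?I = "greedy_set (coeff e (b q)) r"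
  have b_q: "b q \<in> E" and fin: "finite (supp (coeff e (b p)))" for p
    using sep by (simp_all add: separated_blocks_def)
  have x: "?x \<in> E"
    by (rule coeff_suminf_blocks(1)[OF sep summable])
  have I: "greedy_closed (coeff e (b q)) ?I"
    by (rule greedy_closed_greedy_set[OF coeff_tendsto_zero[OF b_q]])
  then have I_supp: "?I \<subseteq> supp (coeff e (b q))"
    by (simp add: greedy_closed_def)
  have disj: "disjoint_family (\<lambda>p. supp (coeff e (b p)))"
    using sep by (simp add: separated_blocks_def)
  have "supp (coeff e (b p)) \<inter> supp (coeff e (b q)) = {}" if "p < q" for p
    using disjoint_family_onD[OF disj] that by simp
  then have disjoint: "?J \<inter> ?I = {}"
    using I_supp by blast
  have fin_J: "finite ?J" and fin_I: "finite ?I"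
    using fin I by (simp_all add: greedy_closed_def)
  have "coord_proj (?J \<union> ?I) ?x = coord_proj ?J ?x + coord_proj ?I ?x"
    unfolding coord_proj_def by (rule sum.union_disjoint[OF fin_J fin_I disjoint])
  moreover have "coord_proj ?I ?x = coord_proj ?I (b q)"
    unfolding coord_proj_def
    using I_supp coeff_suminf_blocks(2)[OF sep summable] by (intro sum.cong) auto
  moreover have "coord_proj ?I (b q) = greedy_sum e r (b q)"
    by (rule greedy_sum_eq_coord_proj[OF b_q, symmetric])
  moreover have "greedy_closed (coeff e ?x) ?J"
    using greedy_closed_blocks[OF sep summable greedy_closed_empty[of "coeff e (b q)"]] by simp
  then have "coord_proj ?J ?x = greedy_sum e (card ?J) ?x"
    by (rule coord_proj_greedy_closed[OF x])
  moreover have "coord_proj (?J \<union> ?I) ?x = greedy_sum e (card (?J \<union> ?I)) ?x"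
    by (rule coord_proj_greedy_closed[OF x greedy_closed_blocks[OF sep summable I]])
  moreover have "?J \<union> ?I \<subseteq> (\<Union>p\<le>q. supp (coeff e (b p)))"
    using I_supp by (force intro: less_imp_le)
  then have "card (?J \<union> ?I) \<le> K" "card ?J \<le> K"
    unfolding K_def using fin by (auto intro!: card_mono)
  ultimately show ?thesis
    by (intro exI[of _ "card (?J \<union> ?I)"] exI[of _ "card ?J"]) simp
qed

end

section \<open>The greedy maximal function\<close>

locale greedy_banach_lattice = bounded_below_basic_sequence e for e :: "nat \<Rightarrow> 'a::banach_lattice"
begin

definition greedy_max :: "'a \<Rightarrow> nat \<Rightarrow> 'a" where
  "greedy_max x m = Sup_fin ((\<lambda>n. labs (greedy_sum e n x)) ` {1..m})"

lemma greedy_max_ge: "n \<le> m \<Longrightarrow> 1 \<le> m \<Longrightarrow> labs (greedy_sum e n x) \<le> greedy_max x m"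
proof (cases "n = 0")
  case True
  assume "1 \<le> m"
  then have "labs (greedy_sum e 1 x) \<le> greedy_max x m"
    unfolding greedy_max_def by (intro Sup_fin.coboundedI) auto
  then show ?thesis
    using True labs_nonneg order_trans by (fastforce simp: greedy_sum_def)
qed (auto simp: greedy_max_def intro: Sup_fin.coboundedI)

lemma greedy_max_nonneg: "1 \<le> m \<Longrightarrow> 0 \<le> greedy_max x m"
  using greedy_max_ge[of 0 m x] by (simp add: greedy_sum_def)

lemma greedy_max_le:
  "1 \<le> m \<Longrightarrow> (\<And>n. 1 \<le> n \<Longrightarrow> n \<le> m \<Longrightarrow> labs (greedy_sum e n x) \<le> u) \<Longrightarrow> greedy_max x m \<le> u"
  unfolding greedy_max_def by (rule Sup_fin.boundedI) auto

lemma norm_greedy_max_le: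
  "(\<And>n. labs (greedy_sum e n x) \<le> u) \<Longrightarrow> 1 \<le> m \<Longrightarrow> norm (greedy_max x m) \<le> norm u"
  by (intro norm_mono_nonneg greedy_max_nonneg greedy_max_le)

lemma greedy_max_scaleR_le:
  assumes x: "x \<in> E" and s: "0 \<le> s" and m: "1 \<le> m"
  shows "greedy_max (s *\<^sub>R x) m \<le> s *\<^sub>R greedy_max x m"
proof (rule greedy_max_le[OF m])
  fix n assume "1 \<le> n" "n \<le> m"
  then show "labs (greedy_sum e n (s *\<^sub>R x)) \<le> s *\<^sub>R greedy_max x m"
    using s greedy_max_ge[of n m x] m
    by (simp add: greedy_sum_scaleR[OF x] labs_scaleR scaleR_left_mono)
qed

lemma greedy_max_scaleR:
  assumes x: "x \<in> E" and s: "0 < s" and m: "1 \<le> m"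
  shows "greedy_max (s *\<^sub>R x) m = s *\<^sub>R greedy_max x m"
proof (rule antisym)
  show "greedy_max (s *\<^sub>R x) m \<le> s *\<^sub>R greedy_max x m"
    using greedy_max_scaleR_le[OF x _ m] s by simp
  have "s *\<^sub>R greedy_max x m = s *\<^sub>R greedy_max ((1 / s) *\<^sub>R (s *\<^sub>R x)) m"
    using s by simp
  also have "\<dots> \<le> s *\<^sub>R ((1 / s) *\<^sub>R greedy_max (s *\<^sub>R x) m)"
    using s by (intro scaleR_left_mono greedy_max_scaleR_le scaleR_in_E x m) auto
  finally show "s *\<^sub>R greedy_max x m \<le> greedy_max (s *\<^sub>R x) m"
    using s by simp
qed

lemma greedy_max_of_zero: "1 \<le> m \<Longrightarrow> greedy_max 0 m = 0"
  by (intro antisym greedy_max_le greedy_max_nonneg) (simp_all add: greedy_sum_of_zero)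

lemma labs_greedy_remainder_le:
  assumes x: "x \<in> E" and head: "{..<N} \<inter> supp (coeff e x) \<subseteq> greedy_set (coeff e x) n"
    and "n \<le> M" and "1 \<le> M"
  shows "labs (greedy_sum e n x - x) \<le> labs (x - partial_sum N x) + greedy_max (x - partial_sum N x) M"
proof -
  let ?z = "x - partial_sum N x"
  obtain k where k: "k \<le> n" and tail: "x - greedy_sum e n x = ?z - greedy_sum e k ?z"
    using greedy_sum_tail[OF x head] by blast
  have "labs (greedy_sum e n x - x) = labs (?z - greedy_sum e k ?z)"
    by (simp add: labs_minus_commute[of _ x] tail)
  also have "\<dots> \<le> labs ?z + labs (greedy_sum e k ?z)"
    by (rule labs_diff_le)
  also have "\<dots> \<le> labs ?z + greedy_max ?z M"
    using k assms(3,4) by (intro add_left_mono greedy_max_ge) simp_all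
  finally show ?thesis .
qed

lemma u_conv_greedy_sum_if_greedy_max_bounded:
  assumes C: "0 \<le> C" "\<And>y m. y \<in> E \<Longrightarrow> 1 \<le> m \<Longrightarrow> norm (greedy_max y m) \<le> C * norm y"
    and x: "x \<in> E"
  shows "u_conv (\<lambda>m. greedy_sum e m x) x"
proof -
  have "\<exists>N. norm (x - partial_sum N x) \<le> (1/4) ^ j" for j :: nat
    using LIMSEQ_D[OF partial_sum_tendsto[OF x], of "(1/4) ^ j"]
    by (auto simp: norm_minus_commute intro: less_imp_le)
  then obtain N where N: "\<And>j. norm (x - partial_sum (N j) x) \<le> (1/4) ^ j"
    by metis
  define z where "z j = x - partial_sum (N j) x" for j
  have z_E: "z j \<in> E" for j
    using x by (simp add: z_def diff_in_E coord_proj_in_E)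
  obtain M where M: "strict_mono M"
    and head: "\<And>j m. M j \<le> m \<Longrightarrow> {..<N j} \<inter> supp (coeff e x) \<subseteq> greedy_set (coeff e x) m"
    by (rule greedy_set_contains_blocks[where N = N and a = "coeff e x"]) blast
  have M_pos: "1 \<le> M (Suc j)" for j
    using strict_monoD[OF M, of j "Suc j"] by simp
  define w where "w j = labs (z j) + greedy_max (z j) (M (Suc j))" for j
  show ?thesis
  proof (rule u_conv_of_blockwise_bound[OF M])
    fix j n assume n: "M j \<le> n" "n < M (Suc j)"
    then show "labs (greedy_sum e n x - x) \<le> w j"
      unfolding w_def z_def by (intro labs_greedy_remainder_le[OF x head[OF n(1)] _ M_pos]) simp
  next
    show "0 \<le> w j" for j
      unfolding w_def by (intro add_nonneg_nonneg labs_nonneg greedy_max_nonneg M_pos)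
  next
    have "2 ^ j * norm (w j) \<le> (1 + C) * (1/2) ^ j" for j :: nat
    proof -
      have "norm (w j) \<le> norm (z j) + C * norm (z j)"
        unfolding w_def
        using norm_triangle_ineq[of "labs (z j)" "greedy_max (z j) (M (Suc j))"] C(2)[OF z_E M_pos, of j j]
        by simp
      also have "\<dots> \<le> (1 + C) * (1/4) ^ j"
        using N[of j] mult_left_mono[OF N[of j] C(1)] by (simp add: z_def algebra_simps)
      finally have "2 ^ j * norm (w j) \<le> 2 ^ j * ((1 + C) * (1/4) ^ j)"
        by simp
      also have "\<dots> = (1 + C) * (1/2) ^ j"
        by (simp add: power_divide field_simps flip: power_mult_distrib)
      finally show ?thesis .
    qed
    then show "summable (\<lambda>j. 2 ^ j * norm (w j))"
      by (intro summable_comparison_test'[where N = 0, OF summable_mult[OF summable_geometric]]) auto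
  qed
qed

lemma labs_coord_proj_le: "labs (coord_proj A x) \<le> (\<Sum>i\<in>A. \<bar>coeff e x i\<bar> *\<^sub>R labs (e i))"
  unfolding coord_proj_def using labs_sum_le[of "\<lambda>i. coeff e x i *\<^sub>R e i" A]
  by (simp add: labs_scaleR)

lemma greedy_max_le_block_plus_head:
  assumes x: "x \<in> E" and m: "1 \<le> m" and G: "greedy_set (coeff e x) m \<subseteq> {..<N'}"
  shows "greedy_max x m
    \<le> greedy_max (coord_proj {N..<N'} x) m + (\<Sum>i<N. \<bar>coeff e x i\<bar> *\<^sub>R labs (e i))"
proof (rule greedy_max_le[OF m])
  fix n assume n: "1 \<le> n" "n \<le> m"
  let ?a = "coeff e x" and ?S = "{N..<N'}" and ?y = "coord_proj {N..<N'} x"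
  let ?G = "greedy_set ?a n"
  have null: "?a \<longlonglongrightarrow> 0"
    by (rule coeff_tendsto_zero[OF x])
  have fin: "finite ?G"
    by (rule finite_greedy_set[OF null])
  have coeff_y: "coeff e ?y = restrict_seq ?S ?a"
    by (simp add: coeff_coord_proj)
  have "coord_proj (?G \<inter> ?S) x = coord_proj (?G \<inter> ?S) ?y"
    using coord_proj_restrict[OF coeff_y, of "?G \<inter> ?S"] fin by (simp add: Int_assoc)
  also have "\<dots> = greedy_sum e (card (?G \<inter> ?S)) ?y"
    using greedy_closed_restrict[OF greedy_closed_greedy_set[OF null]]
    by (intro coord_proj_greedy_closed coord_proj_in_E) (simp add: coeff_y)
  finally have "labs (coord_proj (?G \<inter> ?S) x) \<le> greedy_max ?y m"
    using card_mono[OF fin, of "?G \<inter> ?S"] card_greedy_set_le[OF null, of n] n m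
    by (auto intro!: greedy_max_ge)
  moreover have "labs (coord_proj (?G - ?S) x) \<le> (\<Sum>i<N. \<bar>?a i\<bar> *\<^sub>R labs (e i))"
  proof -
    have "?G - ?S \<subseteq> {..<N}"
      using G greedy_set_mono[OF n(2), of ?a] by auto
    then have "(\<Sum>i\<in>?G - ?S. \<bar>?a i\<bar> *\<^sub>R labs (e i)) \<le> (\<Sum>i<N. \<bar>?a i\<bar> *\<^sub>R labs (e i))"
      by (intro sum_mono2) (auto intro: scaleR_nonneg_nonneg labs_nonneg)
    then show ?thesis
      using labs_coord_proj_le[of "?G - ?S" x] by (rule order_trans[rotated])
  qed
  ultimately have "labs (coord_proj (?G \<inter> ?S) x) + labs (coord_proj (?G - ?S) x)
      \<le> greedy_max ?y m + (\<Sum>i<N. \<bar>?a i\<bar> *\<^sub>R labs (e i))"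
    by (rule add_mono)
  moreover have "greedy_sum e n x = coord_proj (?G \<inter> ?S) x + coord_proj (?G - ?S) x"
    using coord_proj_Int_Diff[OF fin] greedy_sum_eq_coord_proj[OF x] by simp
  ultimately show "labs (greedy_sum e n x) \<le> greedy_max ?y m + (\<Sum>i<N. \<bar>?a i\<bar> *\<^sub>R labs (e i))"
    using labs_add_le[of "coord_proj (?G \<inter> ?S) x" "coord_proj (?G - ?S) x"] by simp
qed

lemma norm_coeff_head_le:
  assumes "\<And>n. norm (partial_sum n x) \<le> K * norm x"
  shows "norm (\<Sum>i<N. \<bar>coeff e x i\<bar> *\<^sub>R labs (e i)) \<le> 2 * real N * K * norm x"
proof -
  have "norm (\<Sum>i<N. \<bar>coeff e x i\<bar> *\<^sub>R labs (e i)) \<le> (\<Sum>i<N. \<bar>coeff e x i\<bar> * norm (e i))"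
    using norm_sum[of "\<lambda>i. \<bar>coeff e x i\<bar> *\<^sub>R labs (e i)" "{..<N}"] by simp
  also have "\<dots> \<le> (\<Sum>i<N. 2 * K * norm x)"
  proof (rule sum_mono)
    fix i
    show "\<bar>coeff e x i\<bar> * norm (e i) \<le> 2 * K * norm x"
      using coeff_abs_mult_norm_le[of x i] assms[of i] assms[of "Suc i"] by linarith
  qed
  finally show ?thesis
    by simp
qed

lemma large_greedy_max_ratio_beyond:
  assumes unbounded: "\<not> (\<exists>C\<ge>1. \<forall>x\<in>E. \<forall>m\<ge>1. norm (greedy_max x m) \<le> C * norm x)"
    and R: "0 \<le> R"
  obtains y m N' where "y \<in> E" "1 \<le> m" "y \<noteq> 0" "supp (coeff e y) \<subseteq> {N..<N'}"
    "R * norm y < norm (greedy_max y m)"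
proof -
  obtain K\<^sub>0 where K\<^sub>0: "\<And>x N. x \<in> E \<Longrightarrow> norm (partial_sum N x) \<le> K\<^sub>0 * norm x"
    using partial_sums_uniformly_bounded by blast
  define K where "K = max K\<^sub>0 0"
  have K: "norm (partial_sum n x) \<le> K * norm x" if "x \<in> E" for x n
    using K\<^sub>0[OF that, of n] mult_right_mono[of K\<^sub>0 K "norm x"] by (simp add: K_def)
  have K_nonneg: "0 \<le> K"
    by (simp add: K_def)
  define C where "C = 2 * K * R + 2 * real N * K + 1"
  have "1 \<le> C"
    using K_nonneg R by (simp add: C_def)
  then obtain x m where x: "x \<in> E" and m: "1 \<le> m" and big: "C * norm x < norm (greedy_max x m)"
    using unbounded by (meson not_le)
  obtain N\<^sub>1 where N\<^sub>1: "greedy_set (coeff e x) m \<subseteq> {..<N\<^sub>1}"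
    using finite_nat_bounded[OF finite_greedy_set[OF coeff_tendsto_zero[OF x]]] by blast
  define N' where "N' = max N N\<^sub>1"
  define y where "y = coord_proj {N..<N'} x"
  define W where "W = (\<Sum>i<N. \<bar>coeff e x i\<bar> *\<^sub>R labs (e i))"
  have "norm (greedy_max x m) \<le> norm (greedy_max y m + W)"
    unfolding y_def W_def using N\<^sub>1
    by (intro norm_mono_nonneg greedy_max_nonneg m greedy_max_le_block_plus_head x) (auto simp: N'_def)
  then have greedy_max_x: "norm (greedy_max x m) \<le> norm (greedy_max y m) + 2 * real N * K * norm x"
    using norm_triangle_ineq[of "greedy_max y m" W] norm_coeff_head_le[OF K[OF x], of N]
    by (simp add: W_def)
  have "{..<N'} \<inter> {..<N} = {..<N}" "{..<N'} - {..<N} = {N..<N'}"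
    by (auto simp: N'_def)
  then have "y = partial_sum N' x - partial_sum N x"
    using coord_proj_Int_Diff[of "{..<N'}" x "{..<N}"] by (simp add: y_def)
  then have y: "norm y \<le> 2 * K * norm x"
    using norm_triangle_ineq4[of "partial_sum N' x" "partial_sum N x"] K[OF x, of N] K[OF x, of N'] by simp
  have "x \<noteq> 0"
    using big greedy_max_of_zero[OF m] by auto
  then have ratio: "R * norm y < norm (greedy_max y m)"
    using big greedy_max_x mult_left_mono[OF y R]
    by (simp add: C_def algebra_simps) (use norm_ge_zero[of x] in linarith)
  moreover have "y \<noteq> 0"
    using ratio greedy_max_of_zero[OF m] R by auto
  moreover have "supp (coeff e y) \<subseteq> {N..<N'}"
    by (auto simp: y_def coeff_coord_proj supp_def restrict_seq_def)
  ultimately show ?thesis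
    using that[of y m N'] m by (simp add: y_def coord_proj_in_E)
qed

lemma large_greedy_max_beyond:
  assumes unbounded: "\<not> (\<exists>C\<ge>1. \<forall>x\<in>E. \<forall>m\<ge>1. norm (greedy_max x m) \<le> C * norm x)"
    and \<tau>: "\<tau> > 0"
  obtains y m N' where "y \<in> E" "1 \<le> m" "supp (coeff e y) \<subseteq> {N..<N'}" "norm y = \<tau>"
    "R \<le> norm (greedy_max y m)"
proof -
  define R' where "R' = max R 0 / \<tau>"
  have "0 \<le> R'"
    using \<tau> by (simp add: R'_def)
  then obtain y m N' where y: "y \<in> E" "1 \<le> m" "y \<noteq> 0" "supp (coeff e y) \<subseteq> {N..<N'}"
    and ratio: "R' * norm y < norm (greedy_max y m)"
    by (rule large_greedy_max_ratio_beyond[OF unbounded, where N = N]) blast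
  define s where "s = \<tau> / norm y"
  have s: "s > 0"
    using \<tau> y(3) by (simp add: s_def)
  have "R \<le> s * (R' * norm y)"
    using \<tau> y(3) by (simp add: s_def R'_def)
  also have "\<dots> \<le> norm (greedy_max (s *\<^sub>R y) m)"
    using ratio s by (simp add: greedy_max_scaleR[OF y(1) s y(2)])
  finally have "R \<le> norm (greedy_max (s *\<^sub>R y) m)" .
  moreover have "supp (coeff e (s *\<^sub>R y)) = supp (coeff e y)"
    using s by (simp add: supp_def coeff_scaleR[OF y(1)])
  moreover have "norm (s *\<^sub>R y) = \<tau>"
    using \<tau> y(3) by (simp add: s_def)
  ultimately show ?thesis
    using that[of "s *\<^sub>R y" m N'] y by (simp add: scaleR_in_E)
qed

lemma small_bad_vector_beyond:
  assumes unbounded: "\<not> (\<exists>C\<ge>1. \<forall>x\<in>E. \<forall>m\<ge>1. norm (greedy_max x m) \<le> C * norm x)"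
    and \<beta>: "\<beta> > 0"
  obtains y N' where "y \<in> E" "supp (coeff e y) \<subseteq> {L..<N'}" "norm y \<le> (1/2) ^ n"
    "\<And>i. \<bar>coeff e y i\<bar> < \<beta>" "\<exists>m\<ge>1. real n \<le> norm (greedy_max y m)"
proof -
  obtain D where D: "0 \<le> D" "\<And>x i. x \<in> E \<Longrightarrow> \<bar>coeff e x i\<bar> \<le> D * norm x"
    using coeff_bounded by blast
  define \<tau> where "\<tau> = min ((1/2) ^ n) (\<beta> / (D + 1))"
  have \<tau>: "\<tau> > 0"
    using \<beta> D(1) by (simp add: \<tau>_def)
  obtain y m N' where y: "y \<in> E" "1 \<le> m" "supp (coeff e y) \<subseteq> {L..<N'}" "norm y = \<tau>"
    "real n \<le> norm (greedy_max y m)"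
    by (rule large_greedy_max_beyond[OF unbounded \<tau>])
  have "\<bar>coeff e y i\<bar> < \<beta>" for i
  proof -
    have "\<bar>coeff e y i\<bar> \<le> D * (\<beta> / (D + 1))"
      using D(2)[OF y(1), of i] mult_left_mono[of \<tau> "\<beta> / (D + 1)" D] D(1) y(4)
      by (simp add: \<tau>_def)
    also have "\<dots> < \<beta>"
      using \<beta> D(1) by (simp add: field_simps)
    finally show ?thesis .
  qed
  moreover have "\<exists>m\<ge>1. real n \<le> norm (greedy_max y m)"
    using y(2,5) by blast
  ultimately show ?thesis
    using that[of y N'] y(1,3,4) by (simp add: \<tau>_def)
qed

lemma bad_block_sequence:
  assumes unbounded: "\<not> (\<exists>C\<ge>1. \<forall>x\<in>E. \<forall>m\<ge>1. norm (greedy_max x m) \<le> C * norm x)"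
  obtains b L \<beta> where "\<And>n. b n \<in> E" "\<And>n. supp (coeff e (b n)) \<subseteq> {..<L n}"
    "\<And>n. supp (coeff e (b (Suc n))) \<subseteq> {L n..<L (Suc n)}" "incseq L" "decseq \<beta>"
    "\<And>n i. \<bar>coeff e (b n) i\<bar> < \<beta> n" "\<And>n k. coeff e (b n) k \<noteq> 0 \<Longrightarrow> \<beta> (Suc n) \<le> \<bar>coeff e (b n) k\<bar>"
    "\<And>n. norm (b n) \<le> (1/2) ^ n" "\<And>n. \<exists>m\<ge>1. real n \<le> norm (greedy_max (b n) m)"
proof -
  define P where "P n = (\<lambda>(y, L, \<beta>). y \<in> E \<and> supp (coeff e y) \<subseteq> {..<L} \<and> norm y \<le> (1/2) ^ n
      \<and> (\<forall>i. \<bar>coeff e y i\<bar> < \<beta>) \<and> (\<exists>m\<ge>1. real n \<le> norm (greedy_max y m)))" for n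
  define Q where "Q n = (\<lambda>(y, L, \<beta>) (y', L', \<beta>'). L \<le> L' \<and> supp (coeff e y') \<subseteq> {L..<L'} \<and> \<beta>' \<le> \<beta>
      \<and> (\<forall>k. coeff e y k \<noteq> 0 \<longrightarrow> \<beta>' \<le> \<bar>coeff e y k\<bar>))" for n :: nat
  have "P 0 (0, 0, 1)"
    using greedy_max_nonneg[of 1 0] by (auto simp: P_def zero_in_E coeff_zero supp_def intro!: exI[of _ 1])
  moreover have "\<exists>st'. P (Suc n) st' \<and> Q n st st'" if "P n st" for n st
  proof -
    obtain y L \<beta> where st: "st = (y, L, \<beta>)"
      by (cases st) auto
    have y: "y \<in> E" "supp (coeff e y) \<subseteq> {..<L}" "\<And>i. \<bar>coeff e y i\<bar> < \<beta>"
      using that by (auto simp: P_def st)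
    define \<mu> where "\<mu> = Min (insert \<beta> ((\<lambda>k. \<bar>coeff e y k\<bar>) ` supp (coeff e y)))"
    have fin: "finite (supp (coeff e y))"
      using y(2) finite_subset by blast
    have "0 < \<beta>"
      using y(3)[of 0] by linarith
    then have \<mu>: "0 < \<mu>" "\<mu> \<le> \<beta>" "\<And>k. coeff e y k \<noteq> 0 \<Longrightarrow> \<mu> \<le> \<bar>coeff e y k\<bar>"
      using fin by (auto simp: \<mu>_def supp_def)
    obtain y' N' where y': "y' \<in> E" "supp (coeff e y') \<subseteq> {L..<N'}" "norm y' \<le> (1/2) ^ Suc n"
      "\<And>i. \<bar>coeff e y' i\<bar> < \<mu>" "\<exists>m\<ge>1. real (Suc n) \<le> norm (greedy_max y' m)"
      by (rule small_bad_vector_beyond[OF unbounded \<mu>(1), where L = L and n = "Suc n"]) blast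
    have "P (Suc n) (y', max L N', \<mu>)" "Q n st (y', max L N', \<mu>)"
      using y' \<mu> by (auto simp: P_def Q_def st)
    then show ?thesis
      by blast
  qed
  ultimately obtain f where f: "\<And>n. P n (f n)" "\<And>n. Q n (f n) (f (Suc n))"
    using dependent_nat_choice[of P Q] by blast
  define b where "b n = fst (f n)" for n
  define L where "L n = fst (snd (f n))" for n
  define \<beta> where "\<beta> n = snd (snd (f n))" for n
  have P': "P n (b n, L n, \<beta> n)" and Q': "Q n (b n, L n, \<beta> n) (b (Suc n), L (Suc n), \<beta> (Suc n))" for n
    using f[of n] by (simp_all add: b_def L_def \<beta>_def)
  show ?thesis
  proof (rule that[of b L \<beta>])
    show "incseq L" "decseq \<beta>"
      using Q' by (auto simp: Q_def intro: incseq_SucI decseq_SucI)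
  qed (use P' Q' in \<open>auto simp: P_def Q_def\<close>)
qed

lemma bad_separated_blocks:
  assumes unbounded: "\<not> (\<exists>C\<ge>1. \<forall>x\<in>E. \<forall>m\<ge>1. norm (greedy_max x m) \<le> C * norm x)"
  obtains b where "separated_blocks b" "\<And>n. norm (b n) \<le> (1/2) ^ n"
    "\<And>n. \<exists>m\<ge>1. real n \<le> norm (greedy_max (b n) m)"
proof -
  obtain b L \<beta> where b_E: "\<And>n. b n \<in> E" and below: "\<And>n. supp (coeff e (b n)) \<subseteq> {..<L n}"
    and above: "\<And>n. supp (coeff e (b (Suc n))) \<subseteq> {L n..<L (Suc n)}"
    and L: "incseq L" and \<beta>: "decseq \<beta>"
    and small: "\<And>n i. \<bar>coeff e (b n) i\<bar> < \<beta> n"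
    and large: "\<And>n k. coeff e (b n) k \<noteq> 0 \<Longrightarrow> \<beta> (Suc n) \<le> \<bar>coeff e (b n) k\<bar>"
    and norm_b: "\<And>n. norm (b n) \<le> (1/2) ^ n" and bad: "\<And>n. \<exists>m\<ge>1. real n \<le> norm (greedy_max (b n) m)"
    by (rule bad_block_sequence[OF unbounded]) blast
  have disjoint: "supp (coeff e (b p)) \<inter> supp (coeff e (b q)) = {}" if "p < q" for p q
  proof -
    obtain q' where q: "q = Suc q'" "p \<le> q'"
      using \<open>p < q\<close> by (cases q) auto
    then show ?thesis
      using below[of p] above[of q'] incseqD[OF L q(2)] by fastforce
  qed
  have "separated_blocks b"
    unfolding separated_blocks_def
  proof (intro conjI allI impI)
    show "b p \<in> E" "finite (supp (coeff e (b p)))" for p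
      using b_E below[of p] finite_subset by auto
    show "disjoint_family (\<lambda>p. supp (coeff e (b p)))"
      unfolding disjoint_family_on_def using disjoint by (metis Int_commute linorder_neqE_nat)
    fix p q i k assume "p < q" "coeff e (b p) k \<noteq> 0"
    then show "\<bar>coeff e (b q) i\<bar> < \<bar>coeff e (b p) k\<bar>"
      using small[of q i] decseqD[OF \<beta>, of "Suc p" q] large[of p k] by simp
  qed
  then show ?thesis
    using that norm_b bad by blast
qed

lemma greedy_max_uniformly_bounded:
  assumes bounded: "\<And>x. x \<in> E \<Longrightarrow> \<exists>B. \<forall>m\<ge>1. norm (greedy_max x m) \<le> B"
  shows "\<exists>C\<ge>1. \<forall>x\<in>E. \<forall>m\<ge>1. norm (greedy_max x m) \<le> C * norm x"
proof (rule ccontr)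
  assume unbounded: "\<not> ?thesis"
  obtain b where sep: "separated_blocks b" and norm_b: "\<And>n. norm (b n) \<le> (1/2) ^ n"
    and bad: "\<And>n. \<exists>m\<ge>1. real n \<le> norm (greedy_max (b n) m)"
    by (rule bad_separated_blocks[OF unbounded]) blast
  have summable: "summable (\<lambda>p. norm (b p))"
    by (rule summable_comparison_test[OF _ summable_geometric[of "1/2"]]) (use norm_b in auto)
  let ?x = "suminf b"
  obtain B where B: "\<And>m. 1 \<le> m \<Longrightarrow> norm (greedy_max ?x m) \<le> B"
    using bounded[OF coeff_suminf_blocks(1)[OF sep summable]] by blast
  obtain q :: nat where q: "2 * B < real q"
    using reals_Archimedean2 by blast
  obtain m where m: "1 \<le> m" "real q \<le> norm (greedy_max (b q) m)"
    using bad by blast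
  define K where "K = card (\<Union>p\<le>q. supp (coeff e (b p)))"
  have "greedy_max (b q) m \<le> greedy_max ?x (Suc K) + greedy_max ?x (Suc K)"
  proof (rule greedy_max_le[OF m(1)])
    fix r
    obtain j j' where "j \<le> K" "j' \<le> K" and eq: "greedy_sum e r (b q) = greedy_sum e j ?x - greedy_sum e j' ?x"
      using greedy_sum_block_eq_diff[OF sep summable, of q r] unfolding K_def by blast
    then show "labs (greedy_sum e r (b q)) \<le> greedy_max ?x (Suc K) + greedy_max ?x (Suc K)"
      using labs_diff_le[of "greedy_sum e j ?x" "greedy_sum e j' ?x"]
        greedy_max_ge[of j "Suc K" ?x] greedy_max_ge[of j' "Suc K" ?x]
      by (simp add: add_mono order_trans)
  qed
  then have "norm (greedy_max (b q) m) \<le> norm (greedy_max ?x (Suc K) + greedy_max ?x (Suc K))"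
    by (rule norm_mono_nonneg[OF greedy_max_nonneg[OF m(1)]])
  also have "\<dots> \<le> 2 * B"
    using norm_triangle_ineq[of "greedy_max ?x (Suc K)" "greedy_max ?x (Suc K)"] B[of "Suc K"] by simp
  finally show False
    using m(2) q by simp
qed

end

theorem theorem3p3:
  fixes e :: "nat \<Rightarrow> 'a::banach_lattice"
  assumes "basic_sequence e" and "semi_normalized e"
  defines "E \<equiv> cspan e"
  shows "((\<forall>x\<in>E. u_conv (\<lambda>m. greedy_sum e m x) x)
            \<longleftrightarrow> (\<forall>x\<in>E. o_conv (\<lambda>m. greedy_sum e m x) x))
       \<and> ((\<forall>x\<in>E. o_conv (\<lambda>m. greedy_sum e m x) x)
            \<longleftrightarrow> (\<forall>x\<in>E. \<exists>u. \<forall>m. labs (greedy_sum e m x) \<le> u))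
       \<and> ((\<forall>x\<in>E. \<exists>u. \<forall>m. labs (greedy_sum e m x) \<le> u)
            \<longleftrightarrow> (\<forall>x\<in>E. \<exists>B. \<forall>m\<ge>1.
                   norm (Sup_fin ((\<lambda>n. labs (greedy_sum e n x)) ` {1..m})) \<le> B))
       \<and> ((\<forall>x\<in>E. \<exists>B. \<forall>m\<ge>1.
                   norm (Sup_fin ((\<lambda>n. labs (greedy_sum e n x)) ` {1..m})) \<le> B)
            \<longleftrightarrow> (\<exists>C\<ge>1. \<forall>x\<in>E. \<forall>m\<ge>1.
                   norm (Sup_fin ((\<lambda>n. labs (greedy_sum e n x)) ` {1..m})) \<le> C * norm x))"
proof -
  interpret greedy_banach_lattice e
    using assms(1,2) by unfold_locales (auto simp: semi_normalized_def)
  let ?u = "\<forall>x\<in>cspan e. u_conv (\<lambda>m. greedy_sum e m x) x"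
  let ?o = "\<forall>x\<in>cspan e. o_conv (\<lambda>m. greedy_sum e m x) x"
  let ?order_bounded = "\<forall>x\<in>cspan e. \<exists>u. \<forall>m. labs (greedy_sum e m x) \<le> u"
  let ?max_bounded = "\<forall>x\<in>cspan e. \<exists>B. \<forall>m\<ge>1. norm (greedy_max x m) \<le> B"
  let ?max_uniform = "\<exists>C\<ge>1. \<forall>x\<in>cspan e. \<forall>m\<ge>1. norm (greedy_max x m) \<le> C * norm x"
  have "?u \<Longrightarrow> ?o"
    using u_conv_imp_o_conv by blast
  moreover have "?o \<Longrightarrow> ?order_bounded"
    using o_conv_imp_order_bounded by blast
  moreover have "?order_bounded \<Longrightarrow> ?max_bounded"
    using norm_greedy_max_le by (metis (no_types))
  moreover have "?max_bounded \<Longrightarrow> ?max_uniform"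
    by (rule greedy_max_uniformly_bounded) blast
  moreover have "?max_uniform \<Longrightarrow> ?u"
    using u_conv_greedy_sum_if_greedy_max_bounded by (meson order.trans zero_le_one)
  ultimately show ?thesis
    unfolding E_def greedy_max_def[symmetric] by argo
qed

end
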